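(* Let $A$ be a normal bounded linear operator on a complex Hilbert space $\mathcal H\neq\{0\}$. Then \[ W_0(A)=\operatorname{conv}\bigl(\sigma(A)\cap\mathcal C_A\bigr), \] where $\mathcal C_A=\{z\in\mathbb C: |z|=\|A\|\}$.
   Context: The maximal numerical range $W_0(A)$ is the set of all $\lambda\in\mathbb C$ for which there exist unit vectors $x_n\in\mathcal H$ with $\|Ax_n\|\to\|A\|$ and $\langle Ax_n,x_n\rangle\to\lambda$. $\sigma(A)$ denotes the spectrum of $A$ and $\operatorname{conv}$ the convex hull. *)

theory Defs
  imports "HOL-Analysis.Analysis"
begin

class complex_vector = real_vector +
  fixes scaleC :: "complex \<Rightarrow> 'a \<Rightarrow> 'a"
  assumes scaleC_add_right: "scaleC a (x + y) = scaleC a x + scaleC a y"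
    and scaleC_add_left: "scaleC (a + b) x = scaleC a x + scaleC b x"
    and scaleC_scaleC: "scaleC a (scaleC b x) = scaleC (a * b) x"
    and scaleC_one: "scaleC 1 x = x"
    and scaleR_scaleC: "scaleR r x = scaleC (complex_of_real r) x"

class complex_inner = complex_vector + real_normed_vector +
  fixes cinner :: "'a \<Rightarrow> 'a \<Rightarrow> complex"
  assumes cinner_add_left: "cinner (x + y) z = cinner x z + cinner y z"
    and cinner_scaleC_left: "cinner (scaleC c x) y = c * cinner x y"
    and cinner_commute: "cinner y x = cnj (cinner x y)"
    and cinner_nonneg: "0 \<le> Re (cinner x x)"
    and cinner_eq_zero_iff: "cinner x x = 0 \<longleftrightarrow> x = 0"
    and norm_eq_sqrt_cinner: "norm x = sqrt (Re (cinner x x))"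

class chilbert_space = complex_inner + complete_space

text \<open>Non-vacuity: the complex numbers form a complex Hilbert space.\<close>

instantiation complex :: complex_inner
begin
definition scaleC_complex_def: "scaleC (a::complex) (x::complex) = a * x"
definition cinner_complex_def: "cinner (x::complex) y = x * cnj y"
instance
proof
  fix x y z a b :: complex and r :: real
  show "scaleC a (x + y) = scaleC a x + scaleC a y" by (simp add: scaleC_complex_def algebra_simps)
  show "scaleC (a + b) x = scaleC a x + scaleC b x" by (simp add: scaleC_complex_def algebra_simps)
  show "scaleC a (scaleC b x) = scaleC (a * b) x" by (simp add: scaleC_complex_def)
  show "scaleC 1 x = x" by (simp add: scaleC_complex_def)
  show "scaleR r x = scaleC (complex_of_real r) x" by (simp add: scaleC_complex_def scaleR_conv_of_real)
  show "cinner (x + y) z = cinner x z + cinner y z" by (simp add: cinner_complex_def algebra_simps)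
  show "cinner (scaleC a x) y = a * cinner x y" by (simp add: cinner_complex_def scaleC_complex_def)
  show "cinner y x = cnj (cinner x y)" by (simp add: cinner_complex_def mult.commute)
  show "0 \<le> Re (cinner x x)" by (simp add: cinner_complex_def)
  show "cinner x x = 0 \<longleftrightarrow> x = 0" by (simp add: cinner_complex_def)
  show "norm x = sqrt (Re (cinner x x))"
    by (simp add: cinner_complex_def complex_mult_cnj cmod_def)
qed
end

instance complex :: chilbert_space ..

definition bounded_clinear :: "('a::complex_inner \<Rightarrow> 'b::complex_inner) \<Rightarrow> bool" where
  "bounded_clinear f \<longleftrightarrow> bounded_linear f \<and> (\<forall>c x. f (scaleC c x) = scaleC c (f x))"

definition is_adjoint :: "('a::complex_inner \<Rightarrow> 'a) \<Rightarrow> ('a \<Rightarrow> 'a) \<Rightarrow> bool" where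
  "is_adjoint A B \<longleftrightarrow> (\<forall>x y. cinner (A x) y = cinner x (B y))"

definition normal_op :: "('a::complex_inner \<Rightarrow> 'a) \<Rightarrow> bool" where
  "normal_op A \<longleftrightarrow> bounded_clinear A \<and>
     (\<exists>B. bounded_clinear B \<and> is_adjoint A B \<and> (\<forall>x. A (B x) = B (A x)))"

definition op_spectrum :: "('a::complex_inner \<Rightarrow> 'a) \<Rightarrow> complex set" where
  "op_spectrum A = {l. \<not> (\<exists>B. bounded_clinear B \<and>
       (\<forall>x. B (A x - scaleC l x) = x) \<and> (\<forall>x. A (B x) - scaleC l (B x) = x))}"

definition max_numerical_range :: "('a::complex_inner \<Rightarrow> 'a) \<Rightarrow> complex set" where
  "max_numerical_range A = {l. \<exists>x :: nat \<Rightarrow> 'a. (\<forall>n. norm (x n) = 1) \<and>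
       (\<lambda>n. norm (A (x n))) \<longlonglongrightarrow> onorm A \<and>
       (\<lambda>n. cinner (A (x n)) (x n)) \<longlonglongrightarrow> l}"

end

theory Submission
  imports Defs
begin

text \<open>For a normal operator every spectral point is an approximate eigenvalue, and approximate
  eigenvectors for distinct approximate eigenvalues are almost orthogonal, since they are also
  approximate eigenvectors of the adjoint. Superposing approximate eigenvectors for finitely many
  points \<open>\<lambda>\<^sub>i\<close> of \<open>\<sigma>(A)\<close> on the circle \<open>|z| = \<parallel>A\<parallel>\<close> with weights \<open>\<surd>u\<^sub>i\<close> therefore gives almost norming
  vectors \<open>y\<close> with \<open>\<langle>Ay,y\<rangle> \<approx> \<Sum> u\<^sub>i \<lambda>\<^sub>i\<close>, which proves \<open>\<supseteq>\<close>.

  For \<open>\<subseteq>\<close>, the separating hyperplane theorem reduces the claim to: for \<open>\<lambda> \<in> W\<^sub>0(A)\<close> and every unit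
  \<open>w\<close> there is \<open>\<mu> \<in> \<sigma>(A)\<close> with \<open>|\<mu>| = \<parallel>A\<parallel>\<close> and \<open>Re (w\<^sup>* \<lambda>) \<le> Re (w\<^sup>* \<mu>)\<close>. Write \<open>w\<^sup>* A = T\<^sub>1 + i T\<^sub>2\<close> with
  commuting hermitian \<open>T\<^sub>1, T\<^sub>2\<close>; the defect \<open>\<parallel>A\<parallel>\<^sup>2 - A\<^sup>*A \<ge> 0\<close> is almost zero on almost norming
  vectors. Without the spectral theorem, approximate joint eigenvectors are obtained by maximising
  \<open>\<langle>Tx,x\<rangle> - K\<langle>Qx,x\<rangle>\<close> on the unit sphere and letting \<open>K \<rightarrow> \<infinity>\<close>, first for \<open>T\<^sub>1\<close> against the defect, then
  for \<open>T\<^sub>2\<close> against the defect plus \<open>(T\<^sub>1 - b)\<^sup>2\<close>. The joint approximate eigenvalue \<open>b + ic\<close>, rotated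
  back by \<open>w\<close>, is the required \<open>\<mu>\<close>.\<close>

notation scaleC (infixr "*\<^sub>C" 75)

section \<open>Complex inner product spaces\<close>

lemma scaleC_diff_right: "c *\<^sub>C (x - y) = c *\<^sub>C x - c *\<^sub>C y"
  using scaleC_add_right[of c "x - y" y] by (simp add: eq_diff_eq)

lemma scaleC_diff_left: "(a - b) *\<^sub>C x = a *\<^sub>C x - b *\<^sub>C x"
  using scaleC_add_left[of "a - b" b x] by (simp add: eq_diff_eq)

lemma scaleC_of_real: "complex_of_real r *\<^sub>C x = r *\<^sub>R x"
  by (simp add: scaleR_scaleC)

lemma cinner_add_right: "cinner x (y + z) = cinner x y + cinner x z"
  by (subst (1 2 3) cinner_commute) (simp add: cinner_add_left)

lemma cinner_scaleC_right: "cinner x (c *\<^sub>C y) = cnj c * cinner x y"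
  by (subst (1 2) cinner_commute) (simp add: cinner_scaleC_left)

lemma cinner_diff_left: "cinner (x - y) z = cinner x z - cinner y z"
  using cinner_add_left[of "x - y" y z] by (simp add: eq_diff_eq)

lemma cinner_diff_right: "cinner x (y - z) = cinner x y - cinner x z"
  using cinner_add_right[of x "y - z" z] by (simp add: eq_diff_eq)

lemma cinner_zero_left [simp]: "cinner 0 y = 0"
  using cinner_diff_left[of 0 0 y] by simp

lemma cinner_zero_right [simp]: "cinner x 0 = 0"
  using cinner_diff_right[of x 0 0] by simp

lemma cinner_scaleR_left: "cinner (r *\<^sub>R x) y = of_real r * cinner x y"
  by (simp add: scaleR_scaleC cinner_scaleC_left)

lemma cinner_scaleR_right: "cinner x (r *\<^sub>R y) = of_real r * cinner x y"
  by (simp add: scaleR_scaleC cinner_scaleC_right)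

lemma cinner_sum_left: "cinner (sum f S) y = (\<Sum>i\<in>S. cinner (f i) y)"
  by (induction S rule: infinite_finite_induct) (auto simp: cinner_add_left)

lemma cinner_sum_right: "cinner x (sum f S) = (\<Sum>i\<in>S. cinner x (f i))"
  by (induction S rule: infinite_finite_induct) (auto simp: cinner_add_right)

lemma Im_cinner_self [simp]: "Im (cinner x x) = 0"
proof -
  have "Im (cinner x x) = Im (cnj (cinner x x))"
    by (subst cinner_commute) simp
  then show ?thesis
    by simp
qed

lemma cinner_self: "cinner x x = complex_of_real ((norm x)\<^sup>2)"
  by (simp add: complex_eq_iff norm_eq_sqrt_cinner cinner_nonneg)

lemma Re_cinner_self: "Re (cinner x x) = (norm x)\<^sup>2"
  by (simp add: cinner_self)

lemma Re_cinner_commute: "Re (cinner x y) = Re (cinner y x)"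
  by (subst cinner_commute) simp

lemma power2_norm_diff:
  "(norm (x - y))\<^sup>2 = (norm x)\<^sup>2 - 2 * Re (cinner x y) + (norm y)\<^sup>2"
  by (simp add: Re_cinner_self[symmetric] cinner_diff_left cinner_diff_right
      Re_cinner_commute[of y x])

lemma Re_cinner_le_norm: "Re (cinner x y) \<le> norm x * norm y"
proof (cases "x = 0 \<or> y = 0")
  case True
  then show ?thesis by auto
next
  case False
  let ?a = "norm y" and ?b = "norm x"
  have ab: "?a > 0" "?b > 0" using False by auto
  have "0 \<le> (norm (?a *\<^sub>R x - ?b *\<^sub>R y))\<^sup>2" by simp
  also have "\<dots> = ?a\<^sup>2 * ?b\<^sup>2 - 2 * ?a * ?b * Re (cinner x y) + ?b\<^sup>2 * ?a\<^sup>2"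
    by (simp add: power2_norm_diff cinner_scaleR_left cinner_scaleR_right power_mult_distrib)
  finally have "2 * ?a * ?b * Re (cinner x y) \<le> 2 * ?a * ?b * (?b * ?a)"
    by (simp add: power2_eq_square algebra_simps)
  then show ?thesis using ab by (simp add: mult.commute)
qed

lemma abs_Re_cinner_le_norm: "\<bar>Re (cinner x y)\<bar> \<le> norm x * norm y"
  using Re_cinner_le_norm[of x y] Re_cinner_le_norm[of "- x" y]
  by (simp add: cinner_diff_left[of 0 x, simplified])

lemma norm_scaleC [simp]: "norm (c *\<^sub>C (x::'a::complex_inner)) = cmod c * norm x"
proof -
  have "(norm (c *\<^sub>C x))\<^sup>2 = Re (c * cnj c * cinner x x)"
    by (simp add: Re_cinner_self[symmetric] cinner_scaleC_left cinner_scaleC_right mult.assoc)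
  also have "\<dots> = (cmod c * norm x)\<^sup>2"
    by (simp add: cinner_self complex_mult_cnj power_mult_distrib cmod_power2)
  finally show ?thesis
    by (simp add: power2_eq_iff_nonneg)
qed

lemma norm_cinner_le: "cmod (cinner x y) \<le> norm x * norm y"
proof -
  let ?c = "cinner x y"
  have "cmod ?c * cmod ?c = Re (cinner (cnj ?c *\<^sub>C x) y)"
    using cmod_power2[of ?c] by (simp add: cinner_scaleC_left power2_eq_square)
  also have "\<dots> \<le> cmod ?c * (norm x * norm y)"
    using Re_cinner_le_norm[of "cnj ?c *\<^sub>C x" y] by (simp add: mult.assoc)
  finally show ?thesis
    by (metis mult_le_cancel_left_pos norm_ge_zero order.order_iff_strict mult_nonneg_nonneg)
qed

section \<open>Normal operators and their spectrum\<close>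

lemma bounded_clinear_bounded_linear: "bounded_clinear A \<Longrightarrow> bounded_linear A"
  by (simp add: bounded_clinear_def)

lemma bounded_clinear_linear: "bounded_clinear A \<Longrightarrow> linear A"
  by (simp add: bounded_clinear_def bounded_linear.linear)

lemma bounded_clinear_scaleC: "bounded_clinear A \<Longrightarrow> A (c *\<^sub>C x) = c *\<^sub>C A x"
  by (simp add: bounded_clinear_def)

lemma bounded_clinear_norm_le: "bounded_clinear A \<Longrightarrow> norm (A x) \<le> onorm A * norm x"
  by (simp add: bounded_clinear_def onorm)

lemma bounded_clinear_onorm_nonneg: "bounded_clinear A \<Longrightarrow> 0 \<le> onorm A"
  by (simp add: bounded_clinear_def onorm_pos_le)

lemma bounded_clinearI:
  assumes "\<And>x y. f (x + y) = f x + f y" "\<And>c x. f (c *\<^sub>C x) = c *\<^sub>C f x"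
    and "\<And>x. norm (f x) \<le> norm x * K"
  shows "bounded_clinear f"
  unfolding bounded_clinear_def using assms
  by (auto intro!: bounded_linear_intro[where K=K] simp: scaleR_scaleC)

lemma bounded_clinear_scaleC_ident: "bounded_clinear (\<lambda>x. c *\<^sub>C x)"
  by (rule bounded_clinearI[where K="cmod c"])
    (auto simp: scaleC_add_right scaleC_scaleC mult.commute)

lemma bounded_clinear_compose:
  "bounded_clinear A \<Longrightarrow> bounded_clinear B \<Longrightarrow> bounded_clinear (\<lambda>x. A (B x))"
  unfolding bounded_clinear_def by (auto intro: bounded_linear_compose)

lemma bounded_clinear_add:
  "bounded_clinear A \<Longrightarrow> bounded_clinear B \<Longrightarrow> bounded_clinear (\<lambda>x. A x + B x)"
  unfolding bounded_clinear_def by (auto intro: bounded_linear_add simp: scaleC_add_right)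

lemma bounded_clinear_diff:
  "bounded_clinear A \<Longrightarrow> bounded_clinear B \<Longrightarrow> bounded_clinear (\<lambda>x. A x - B x)"
  unfolding bounded_clinear_def by (auto intro: bounded_linear_sub simp: scaleC_diff_right)

lemma bounded_clinear_const_scaleC:
  "bounded_clinear A \<Longrightarrow> bounded_clinear (\<lambda>x. c *\<^sub>C A x)"
  using bounded_clinear_compose[OF bounded_clinear_scaleC_ident, of A c] by simp

lemma is_adjoint_sym: "is_adjoint A B \<Longrightarrow> cinner (B x) y = cinner x (A y)"
  unfolding is_adjoint_def by (metis cinner_commute)

definition normal_pair :: "('a::complex_inner \<Rightarrow> 'a) \<Rightarrow> ('a \<Rightarrow> 'a) \<Rightarrow> bool" where
  "normal_pair A B \<longleftrightarrow> bounded_clinear A \<and> bounded_clinear B \<and> is_adjoint A B \<and>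
     (\<forall>x. A (B x) = B (A x))"

lemma normal_op_iff_normal_pair: "normal_op A \<longleftrightarrow> (\<exists>B. normal_pair A B)"
  unfolding normal_op_def normal_pair_def by blast

lemma normal_pair_norm_eq:
  assumes "normal_pair A B"
  shows "norm (A x) = norm (B x)"
proof -
  have "(norm (A x))\<^sup>2 = Re (cinner x (B (A x)))"
    using assms by (simp add: normal_pair_def is_adjoint_def Re_cinner_self[symmetric])
  also have "\<dots> = Re (cinner (B x) (B x))"
    using assms is_adjoint_sym[of A B x "B x"] by (simp add: normal_pair_def)
  finally show ?thesis by (simp add: Re_cinner_self power2_eq_iff_nonneg)
qed

lemma normal_pair_shift:
  assumes "normal_pair A B"
  shows "normal_pair (\<lambda>x. A x - m *\<^sub>C x) (\<lambda>x. B x - cnj m *\<^sub>C x)"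
proof -
  have A: "bounded_clinear A" and B: "bounded_clinear B" and adj: "is_adjoint A B"
    and comm: "\<And>x. A (B x) = B (A x)"
    using assms by (auto simp: normal_pair_def)
  show ?thesis
    unfolding normal_pair_def
  proof (intro conjI allI)
    show "bounded_clinear (\<lambda>x. A x - m *\<^sub>C x)" "bounded_clinear (\<lambda>x. B x - cnj m *\<^sub>C x)"
      by (simp_all add: bounded_clinear_diff A B bounded_clinear_scaleC_ident)
    show "is_adjoint (\<lambda>x. A x - m *\<^sub>C x) (\<lambda>x. B x - cnj m *\<^sub>C x)"
      using adj unfolding is_adjoint_def
      by (simp add: cinner_diff_left cinner_diff_right cinner_scaleC_left cinner_scaleC_right)
    show "A (B x - cnj m *\<^sub>C x) - m *\<^sub>C (B x - cnj m *\<^sub>C x)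
        = B (A x - m *\<^sub>C x) - cnj m *\<^sub>C (A x - m *\<^sub>C x)" for x
      using comm[of x] by (simp add: linear_diff[OF bounded_clinear_linear[OF A]]
          linear_diff[OF bounded_clinear_linear[OF B]] bounded_clinear_scaleC[OF A]
          bounded_clinear_scaleC[OF B] scaleC_diff_right scaleC_scaleC mult.commute)
  qed
qed

lemma normal_pair_scaleC:
  assumes "normal_pair A B"
  shows "normal_pair (\<lambda>x. c *\<^sub>C A x) (\<lambda>x. cnj c *\<^sub>C B x)"
proof -
  have A: "bounded_clinear A" and B: "bounded_clinear B"
    using assms by (auto simp: normal_pair_def)
  show ?thesis
    using assms unfolding normal_pair_def is_adjoint_def
    by (simp add: bounded_clinear_const_scaleC cinner_scaleC_left cinner_scaleC_right
        bounded_clinear_scaleC[OF A] bounded_clinear_scaleC[OF B] scaleC_scaleC mult.commute)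
qed

lemma normal_bounded_below_contraction:
  fixes N :: "'a::complex_inner \<Rightarrow> 'a"
  assumes NN': "normal_pair N N'" and c: "c > 0" and below: "\<And>x. c * norm x \<le> norm (N x)"
  defines "K \<equiv> (onorm N)\<^sup>2 + c\<^sup>2"
  shows "norm (x - (1 / K) *\<^sub>R N' (N x)) \<le> sqrt (1 - c\<^sup>2 / K) * norm x"
proof -
  have N: "bounded_clinear N" and adj: "is_adjoint N N'"
    using NN' by (auto simp: normal_pair_def)
  have K: "K > 0" "c\<^sup>2 \<le> K" unfolding K_def using c by (auto intro!: add_nonneg_pos)
  have re: "Re (cinner x (N' (N x))) = (norm (N x))\<^sup>2"
    using adj unfolding is_adjoint_def by (metis Re_cinner_self)
  have "norm (N' (N x)) \<le> onorm N * norm (N x)"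
    using normal_pair_norm_eq[OF NN', of "N x"] bounded_clinear_norm_le[OF N, of "N x"] by simp
  then have "(norm (N' (N x)))\<^sup>2 \<le> (onorm N * norm (N x))\<^sup>2"
    by (simp add: power_mono)
  also have "\<dots> \<le> K * (norm (N x))\<^sup>2"
    unfolding K_def by (simp add: power_mult_distrib algebra_simps)
  finally have N'N: "(norm (N' (N x)))\<^sup>2 \<le> K * (norm (N x))\<^sup>2" .
  have "(norm (x - (1 / K) *\<^sub>R N' (N x)))\<^sup>2
      = (norm x)\<^sup>2 - 2 / K * (norm (N x))\<^sup>2 + (norm (N' (N x)))\<^sup>2 / K\<^sup>2"
    using K by (simp add: power2_norm_diff cinner_scaleR_right re power_divide)
  also have "\<dots> \<le> (norm x)\<^sup>2 - 2 / K * (norm (N x))\<^sup>2 + K * (norm (N x))\<^sup>2 / K\<^sup>2"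
    using N'N by (simp add: divide_right_mono)
  also have "\<dots> = (norm x)\<^sup>2 - (norm (N x))\<^sup>2 / K"
    using K by (simp add: field_simps power2_eq_square)
  also have "\<dots> \<le> (norm x)\<^sup>2 - c\<^sup>2 * (norm x)\<^sup>2 / K"
  proof -
    have "(c * norm x)\<^sup>2 \<le> (norm (N x))\<^sup>2" using below[of x] c by (simp add: power_mono)
    then show ?thesis using K by (simp add: divide_right_mono power_mult_distrib)
  qed
  also have "\<dots> = (sqrt (1 - c\<^sup>2 / K) * norm x)\<^sup>2"
    using K by (simp add: power_mult_distrib field_simps)
  finally have "(norm (x - (1 / K) *\<^sub>R N' (N x)))\<^sup>2 \<le> (sqrt (1 - c\<^sup>2 / K) * norm x)\<^sup>2" .
  moreover have "0 \<le> sqrt (1 - c\<^sup>2 / K) * norm x" using K by (simp add: field_simps)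
  ultimately show ?thesis by (rule power2_le_imp_le)
qed

text \<open>The fixed point of the contraction \<open>x \<mapsto> x - s N\<^sup>*N x + s z\<close> solves \<open>N\<^sup>*N x = z\<close>.\<close>

lemma normal_bounded_below_surj:
  fixes N :: "'a::chilbert_space \<Rightarrow> 'a"
  assumes NN': "normal_pair N N'" and c: "c > 0" and below: "\<And>x. c * norm x \<le> norm (N x)"
  shows "surj N"
proof -
  have N: "bounded_clinear N" and N': "bounded_clinear N'" and comm: "\<And>x. N (N' x) = N' (N x)"
    using NN' by (auto simp: normal_pair_def)
  define K where "K = (onorm N)\<^sup>2 + c\<^sup>2"
  have K: "K > 0" "c\<^sup>2 \<le> K" unfolding K_def using c by (auto intro!: add_nonneg_pos)
  define s where "s = 1 / K"
  define Q where "Q = (\<lambda>x. x - s *\<^sub>R N' (N x))"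
  define q where "q = sqrt (1 - c\<^sup>2 / K)"
  have q: "0 \<le> q" "q < 1"
    unfolding q_def using K c by (auto simp: field_simps)
  have Q_contract: "norm (Q x) \<le> q * norm x" for x
    unfolding Q_def s_def q_def K_def by (rule normal_bounded_below_contraction[OF NN' c below])
  have Q_diff: "Q x - Q y = Q (x - y)" for x y
    unfolding Q_def
    by (simp add: linear_diff[OF bounded_clinear_linear[OF N]]
        linear_diff[OF bounded_clinear_linear[OF N']] scaleR_diff_right algebra_simps)
  have "\<exists>x. N x = z" for z
  proof -
    have "\<exists>!y. Q y + s *\<^sub>R z = y"
    proof (rule banach_fix_type[OF q], intro allI)
      fix x y
      show "dist (Q x + s *\<^sub>R z) (Q y + s *\<^sub>R z) \<le> q * dist x y"
        using Q_contract[of "x - y"] by (simp add: dist_norm flip: Q_diff)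
    qed
    then obtain y where "Q y + s *\<^sub>R z = y" by blast
    then have "s *\<^sub>R N' (N y) = s *\<^sub>R z" unfolding Q_def
      by (metis add_diff_cancel_left' diff_add_cancel diff_diff_eq2)
    moreover have "s \<noteq> 0" unfolding s_def using K by simp
    ultimately have "N (N' y) = z" using comm by simp
    then show ?thesis by blast
  qed
  then show ?thesis by (metis surjI)
qed

lemma normal_bounded_below_invertible:
  fixes N :: "'a::chilbert_space \<Rightarrow> 'a"
  assumes NN': "normal_pair N N'" and c: "c > 0" and below: "\<And>x. c * norm x \<le> norm (N x)"
  obtains G where "bounded_clinear G" "\<And>x. G (N x) = x" "\<And>x. N (G x) = x"
proof -
  have N: "bounded_clinear N" using NN' by (simp add: normal_pair_def)
  have "inj N"
  proof (rule injI)
    fix x y assume "N x = N y"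
    then have "c * norm (x - y) \<le> 0"
      using below[of "x - y"] by (simp add: linear_diff[OF bounded_clinear_linear[OF N]])
    then show "x = y" using c by (simp add: mult_le_0_iff)
  qed
  define G where "G = inv N"
  have G_N: "G (N x) = x" for x unfolding G_def using \<open>inj N\<close> by (simp add: inv_f_f)
  have N_G: "N (G x) = x" for x
    unfolding G_def using normal_bounded_below_surj[OF assms] by (simp add: surj_f_inv_f)
  have "bounded_clinear G"
  proof (rule bounded_clinearI[where K="1/c"])
    show "G (x + y) = G x + G y" for x y
      by (metis G_N N_G linear_add[OF bounded_clinear_linear[OF N]])
    show "G (a *\<^sub>C x) = a *\<^sub>C G x" for a x
      by (metis G_N N_G bounded_clinear_scaleC[OF N])
    show "norm (G x) \<le> norm x * (1 / c)" for x
      using below[of "G x"] c by (simp add: N_G field_simps)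
  qed
  then show ?thesis using G_N N_G that by blast
qed

definition approx_eigenvalue :: "('a::complex_inner \<Rightarrow> 'a) \<Rightarrow> complex \<Rightarrow> bool" where
  "approx_eigenvalue A m \<longleftrightarrow> (\<forall>e>0. \<exists>x. norm x = 1 \<and> norm (A x - m *\<^sub>C x) < e)"

lemma approx_eigenvalue_in_spectrum:
  assumes "approx_eigenvalue A m"
  shows "m \<in> op_spectrum A"
proof (rule ccontr)
  assume "m \<notin> op_spectrum A"
  then obtain G where G: "bounded_clinear G" "\<And>x. G (A x - m *\<^sub>C x) = x"
    unfolding op_spectrum_def by blast
  define e where "e = 1 / (onorm G + 1)"
  have G0: "0 \<le> onorm G" by (rule bounded_clinear_onorm_nonneg[OF G(1)])
  then have "e > 0" unfolding e_def by simp
  then obtain x where x: "norm x = 1" "norm (A x - m *\<^sub>C x) < e"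
    using assms unfolding approx_eigenvalue_def by blast
  have "1 = norm (G (A x - m *\<^sub>C x))" using G(2) x(1) by simp
  also have "\<dots> \<le> onorm G * norm (A x - m *\<^sub>C x)" by (rule bounded_clinear_norm_le[OF G(1)])
  also have "\<dots> \<le> onorm G * e" using x(2) G0 by (simp add: mult_left_mono)
  also have "\<dots> < 1" unfolding e_def using G0 by (simp add: field_simps)
  finally show False by simp
qed

lemma normal_spectrum_approx_eigenvalue:
  fixes A :: "'a::chilbert_space \<Rightarrow> 'a"
  assumes "normal_pair A B" and "m \<in> op_spectrum A"
  shows "approx_eigenvalue A m"
proof (rule ccontr)
  define N where "N = (\<lambda>x. A x - m *\<^sub>C x)"
  have NN': "normal_pair N (\<lambda>x. B x - cnj m *\<^sub>C x)"
    unfolding N_def by (rule normal_pair_shift[OF assms(1)])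
  then have N: "bounded_clinear N" by (simp add: normal_pair_def)
  assume "\<not> approx_eigenvalue A m"
  then obtain e where e: "e > 0" "\<And>x. norm x = 1 \<Longrightarrow> e \<le> norm (N x)"
    unfolding approx_eigenvalue_def N_def by (auto simp: not_less)
  have "e * norm x \<le> norm (N x)" for x
  proof (cases "x = 0")
    case True
    then show ?thesis by (simp add: linear_0[OF bounded_clinear_linear[OF N]])
  next
    case False
    have "e \<le> norm (N ((1 / norm x) *\<^sub>R x))" using e(2) False by simp
    also have "\<dots> = norm (N x) / norm x"
      using False by (simp add: linear_scale[OF bounded_clinear_linear[OF N]])
    finally show ?thesis using False by (simp add: field_simps)
  qed
  then obtain G where "bounded_clinear G" "\<And>x. G (N x) = x" "\<And>x. N (G x) = x"
    using normal_bounded_below_invertible[OF NN' e(1)] by blast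
  then have "m \<notin> op_spectrum A"
    unfolding op_spectrum_def N_def by auto
  then show False using assms(2) by simp
qed

lemma normal_spectrum_closed:
  fixes A :: "'a::chilbert_space \<Rightarrow> 'a"
  assumes "normal_pair A B"
  shows "closed (op_spectrum A)"
  unfolding closed_limpt
proof (intro allI impI)
  fix m assume lim: "m islimpt op_spectrum A"
  have "approx_eigenvalue A m" unfolding approx_eigenvalue_def
  proof (intro allI impI)
    fix e :: real assume e: "e > 0"
    obtain m' where m': "m' \<in> op_spectrum A" "dist m' m < e/2"
      using lim e unfolding islimpt_approachable by (metis half_gt_zero)
    obtain x where x: "norm x = 1" "norm (A x - m' *\<^sub>C x) < e/2"
      using normal_spectrum_approx_eigenvalue[OF assms m'(1)] e
      unfolding approx_eigenvalue_def by (metis half_gt_zero)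
    have "norm (A x - m *\<^sub>C x) = norm ((A x - m' *\<^sub>C x) + (m' - m) *\<^sub>C x)"
      by (simp add: scaleC_diff_left algebra_simps)
    also have "\<dots> \<le> norm (A x - m' *\<^sub>C x) + cmod (m' - m)"
      using norm_triangle_ineq[of "A x - m' *\<^sub>C x" "(m' - m) *\<^sub>C x"] x(1) by simp
    finally have "norm (A x - m *\<^sub>C x) \<le> norm (A x - m' *\<^sub>C x) + cmod (m' - m)" .
    then show "\<exists>x. norm x = 1 \<and> norm (A x - m *\<^sub>C x) < e"
      using x m'(2) by (auto simp: dist_norm)
  qed
  then show "m \<in> op_spectrum A" by (rule approx_eigenvalue_in_spectrum)
qed

section \<open>Approximating points of the maximal numerical range\<close>

lemma max_numerical_range_seqI:
  fixes A :: "'a::complex_inner \<Rightarrow> 'a"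
  assumes A: "bounded_clinear A" and ne: "\<exists>x::'a. x \<noteq> 0"
    and y: "(\<lambda>n. norm (y n)) \<longlonglongrightarrow> 1" and Ay: "(\<lambda>n. norm (A (y n))) \<longlonglongrightarrow> onorm A"
    and l: "(\<lambda>n. cinner (A (y n)) (y n)) \<longlonglongrightarrow> l"
  shows "l \<in> max_numerical_range A"
proof -
  obtain x0 :: 'a where "x0 \<noteq> 0" using ne by blast
  define z where "z n = (if y n = 0 then (1 / norm x0) *\<^sub>R x0 else (1 / norm (y n)) *\<^sub>R y n)" for n
  have z_norm: "norm (z n) = 1" for n unfolding z_def using \<open>x0 \<noteq> 0\<close> by simp
  have ev: "\<forall>\<^sub>F n in sequentially. y n \<noteq> 0"
    using order_tendstoD(1)[OF y, of "1/2"] by (rule eventually_mono) auto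
  have lin: "linear A" by (rule bounded_clinear_linear[OF A])
  have "(\<lambda>n. norm (A (y n)) / norm (y n)) \<longlonglongrightarrow> onorm A / 1"
    by (rule tendsto_divide[OF Ay y]) simp
  then have "(\<lambda>n. norm (A (y n)) / norm (y n)) \<longlonglongrightarrow> onorm A"
    by simp
  then have Az: "(\<lambda>n. norm (A (z n))) \<longlonglongrightarrow> onorm A"
    by (rule Lim_transform_eventually[OF _ eventually_mono[OF ev]])
      (simp add: z_def linear_scale[OF lin])
  have "(\<lambda>n. cinner (A (y n)) (y n) / complex_of_real ((norm (y n))\<^sup>2))
      \<longlonglongrightarrow> l / complex_of_real (1\<^sup>2)"
    by (intro tendsto_intros l y) simp
  then have "(\<lambda>n. cinner (A (y n)) (y n) / complex_of_real ((norm (y n))\<^sup>2)) \<longlonglongrightarrow> l"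
    by simp
  then have lz: "(\<lambda>n. cinner (A (z n)) (z n)) \<longlonglongrightarrow> l"
    by (rule Lim_transform_eventually[OF _ eventually_mono[OF ev]])
      (simp add: z_def linear_scale[OF lin] cinner_scaleR_left cinner_scaleR_right
        power2_eq_square field_simps)
  show ?thesis unfolding max_numerical_range_def using z_norm Az lz by blast
qed

lemma max_numerical_range_approxI:
  fixes A :: "'a::complex_inner \<Rightarrow> 'a"
  assumes A: "bounded_clinear A" and ne: "\<exists>x::'a. x \<noteq> 0"
    and approx: "\<And>e. e > 0 \<Longrightarrow> \<exists>y. \<bar>(norm y)\<^sup>2 - 1\<bar> \<le> e \<and>
      \<bar>(norm (A y))\<^sup>2 - (onorm A)\<^sup>2\<bar> \<le> e \<and> cmod (cinner (A y) y - l) \<le> e"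
  shows "l \<in> max_numerical_range A"
proof -
  obtain y where y: "\<And>n. \<bar>(norm (y n))\<^sup>2 - 1\<bar> \<le> inverse (real (Suc n))"
    "\<And>n. \<bar>(norm (A (y n)))\<^sup>2 - (onorm A)\<^sup>2\<bar> \<le> inverse (real (Suc n))"
    "\<And>n. cmod (cinner (A (y n)) (y n) - l) \<le> inverse (real (Suc n))"
    using approx[of "inverse (real (Suc _))"] by (metis inverse_positive_iff_positive of_nat_0_less_iff zero_less_Suc)
  have lim: "f \<longlonglongrightarrow> c" if "\<And>n. norm (f n - c) \<le> inverse (real (Suc n))"
    for f :: "nat \<Rightarrow> 'b::real_normed_vector" and c
  proof -
    have "(\<lambda>n. f n - c) \<longlonglongrightarrow> 0"
      by (rule Lim_null_comparison[OF _ LIMSEQ_inverse_real_of_nat]) (use that in auto)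
    then show ?thesis by (simp add: LIM_zero_iff)
  qed
  have "(\<lambda>n. sqrt ((norm (y n))\<^sup>2)) \<longlonglongrightarrow> sqrt 1"
    by (intro tendsto_real_sqrt lim) (use y(1) in simp)
  moreover have "(\<lambda>n. sqrt ((norm (A (y n)))\<^sup>2)) \<longlonglongrightarrow> sqrt ((onorm A)\<^sup>2)"
    by (intro tendsto_real_sqrt lim) (use y(2) in simp)
  moreover have "(\<lambda>n. cinner (A (y n)) (y n)) \<longlonglongrightarrow> l"
    by (rule lim) (use y(3) in simp)
  ultimately show ?thesis
    using max_numerical_range_seqI[OF A ne] bounded_clinear_onorm_nonneg[OF A] by simp
qed

lemma max_numerical_range_approxD:
  assumes "l \<in> max_numerical_range A" and "e > 0"
  obtains x where "norm x = 1" "\<bar>norm (A x) - onorm A\<bar> < e" "cmod (cinner (A x) x - l) < e"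
proof -
  obtain x where x: "\<And>n. norm (x n) = 1" "(\<lambda>n. norm (A (x n))) \<longlonglongrightarrow> onorm A"
    "(\<lambda>n. cinner (A (x n)) (x n)) \<longlonglongrightarrow> l"
    using assms(1) unfolding max_numerical_range_def by blast
  have "\<forall>\<^sub>F n in sequentially. dist (norm (A (x n))) (onorm A) < e \<and>
      dist (cinner (A (x n)) (x n)) l < e"
    using x(2,3) assms(2) by (auto simp: tendsto_iff intro: eventually_conj)
  then obtain n where "dist (norm (A (x n))) (onorm A) < e" "dist (cinner (A (x n)) (x n)) l < e"
    using eventually_sequentially by auto
  then show ?thesis using x(1) that by (auto simp: dist_norm)
qed

section \<open>Convex combinations of extremal spectral points\<close>

lemma finite_set_separated:
  fixes s :: "'a::metric_space set"
  assumes "finite s"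
  obtains d where "d > 0" "\<And>v w. v \<in> s \<Longrightarrow> w \<in> s \<Longrightarrow> v \<noteq> w \<Longrightarrow> d \<le> dist v w"
proof -
  define D where "D = (\<lambda>(v, w). dist v w) ` {p \<in> s \<times> s. fst p \<noteq> snd p}"
  have "finite D" unfolding D_def using assms by auto
  define d where "d = Min (insert 1 D)"
  have "d > 0" unfolding d_def using \<open>finite D\<close> by (auto simp: D_def Min_gr_iff)
  moreover have "d \<le> dist v w" if "v \<in> s" "w \<in> s" "v \<noteq> w" for v w
  proof -
    have "dist v w \<in> D" unfolding D_def using that by force
    then show ?thesis unfolding d_def using \<open>finite D\<close> by simp
  qed
  ultimately show ?thesis using that by blast
qed

lemma cinner_superposition_near_diagonal:
  fixes f g :: "'i \<Rightarrow> 'a::complex_inner"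
  assumes fin: "finite s" and a: "\<And>v. v \<in> s \<Longrightarrow> 0 \<le> a v \<and> a v \<le> 1"
    and G: "\<And>v w. v \<in> s \<Longrightarrow> w \<in> s \<Longrightarrow>
      cmod (cinner (f v) (g w) - (if v = w then D v else 0)) \<le> eta"
  shows "cmod (cinner (\<Sum>v\<in>s. a v *\<^sub>R f v) (\<Sum>w\<in>s. a w *\<^sub>R g w)
      - (\<Sum>v\<in>s. of_real ((a v)\<^sup>2) * D v)) \<le> (real (card s))\<^sup>2 * eta"
proof -
  let ?E = "\<lambda>v w. cinner (f v) (g w) - (if v = w then D v else 0)"
  have expand: "cinner (\<Sum>v\<in>s. a v *\<^sub>R f v) (\<Sum>w\<in>s. a w *\<^sub>R g w)
      = (\<Sum>v\<in>s. \<Sum>w\<in>s. of_real (a v * a w) * cinner (f v) (g w))"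
    apply (simp add: cinner_sum_left cinner_sum_right cinner_scaleR_left cinner_scaleR_right
        sum_distrib_left mult.assoc)
    apply (subst sum.swap)
    apply (simp add: mult.left_commute)
    done
  have diag: "(\<Sum>w\<in>s. of_real (a v * a w) * (if v = w then D v else 0)) = of_real ((a v)\<^sup>2) * D v"
    if "v \<in> s" for v
  proof -
    have "(\<Sum>w\<in>s. of_real (a v * a w) * (if v = w then D v else 0))
        = (\<Sum>w\<in>s. if w = v then of_real (a v * a v) * D v else 0)"
      by (rule sum.cong) auto
    then show ?thesis using fin that by (simp add: power2_eq_square)
  qed
  have "cinner (\<Sum>v\<in>s. a v *\<^sub>R f v) (\<Sum>w\<in>s. a w *\<^sub>R g w) - (\<Sum>v\<in>s. of_real ((a v)\<^sup>2) * D v)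
      = (\<Sum>v\<in>s. \<Sum>w\<in>s. of_real (a v * a w) * ?E v w)"
  proof -
    have "(\<Sum>v\<in>s. of_real ((a v)\<^sup>2) * D v)
        = (\<Sum>v\<in>s. \<Sum>w\<in>s. of_real (a v * a w) * (if v = w then D v else 0))"
      by (rule sum.cong[OF refl diag[symmetric]])
    then show ?thesis
      unfolding expand by (simp only: sum_subtractf[symmetric] right_diff_distrib)
  qed
  also have "cmod \<dots> \<le> (\<Sum>v\<in>s. \<Sum>w\<in>s. eta)"
  proof (intro sum_norm_le)
    fix v w assume vw: "v \<in> s" "w \<in> s"
    have "\<bar>a v * a w\<bar> \<le> 1" using a[OF vw(1)] a[OF vw(2)] by (simp add: abs_mult mult_le_one)
    then have "\<bar>a v * a w\<bar> * cmod (?E v w) \<le> 1 * eta"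
      using G[OF vw] by (intro mult_mono) auto
    then show "cmod (of_real (a v * a w) * ?E v w) \<le> eta"
      by (simp only: norm_mult norm_of_real mult_1_left)
  qed
  also have "\<dots> = (real (card s))\<^sup>2 * eta" by (simp add: power2_eq_square)
  finally show ?thesis .
qed

lemma approx_eigenvector_estimates:
  fixes A :: "'a::complex_inner \<Rightarrow> 'a"
  assumes nx: "norm x = 1" and ax: "norm (A x - v *\<^sub>C x) \<le> t"
    and v: "cmod v = M" and bnd: "\<And>z. norm (A z) \<le> M * norm z"
  shows "cmod (cinner (A x) x - v) \<le> t"
    and "cmod (cinner (A x) (A x) - of_real (M\<^sup>2)) \<le> 2 * M * t"
proof -
  have "cinner (A x) x - v = cinner (A x - v *\<^sub>C x) x"
    using nx by (simp add: cinner_diff_left cinner_scaleC_left cinner_self)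
  also have "cmod \<dots> \<le> norm (A x - v *\<^sub>C x) * norm x" by (rule norm_cinner_le)
  finally show "cmod (cinner (A x) x - v) \<le> t" using nx ax by simp
  have M0: "0 \<le> M" using v by auto
  have le: "norm (A x) \<le> M" using bnd[of x] nx by simp
  have "\<bar>norm (A x) - cmod v\<bar> \<le> norm (A x - v *\<^sub>C x)"
    using norm_triangle_ineq3[of "A x" "v *\<^sub>C x"] nx by simp
  then have dd: "\<bar>norm (A x) - M\<bar> \<le> t" using ax v by simp
  have "cmod (cinner (A x) (A x) - of_real (M\<^sup>2)) = \<bar>(norm (A x) - M) * (norm (A x) + M)\<bar>"
    by (simp only: cinner_self of_real_diff[symmetric] norm_of_real)
      (simp add: power2_eq_square algebra_simps)
  also have "\<dots> = \<bar>norm (A x) - M\<bar> * (norm (A x) + M)"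
    using M0 by (simp add: abs_mult)
  also have "\<dots> \<le> t * (2 * M)"
    using dd le M0 by (intro mult_mono) auto
  finally show "cmod (cinner (A x) (A x) - of_real (M\<^sup>2)) \<le> 2 * M * t" by (simp add: mult_ac)
qed

text \<open>By normality an approximate eigenvector of \<open>A\<close> for \<open>w\<close> is one of \<open>A\<^sup>*\<close> for \<open>w\<^sup>*\<close>; comparing
  \<open>\<langle>Ax,y\<rangle>\<close> with \<open>\<langle>x,A\<^sup>*y\<rangle>\<close> then forces \<open>(v - w) \<langle>x,y\<rangle> \<approx> 0\<close>.\<close>

lemma approx_eigenvectors_almost_orthogonal:
  fixes A :: "'a::complex_inner \<Rightarrow> 'a"
  assumes AB: "normal_pair A B" and nx: "norm x = 1" and ny: "norm y = 1"
    and ax: "norm (A x - v *\<^sub>C x) \<le> t" and ay: "norm (A y - w *\<^sub>C y) \<le> t"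
    and v: "cmod v = M" and w: "cmod w = M" and bnd: "\<And>z. norm (A z) \<le> M * norm z"
    and d: "d > 0" "d \<le> cmod (v - w)"
  shows "cmod (cinner x y) \<le> 2 * t / d"
    and "cmod (cinner (A x) y) \<le> t + M * (2 * t / d)"
    and "cmod (cinner (A x) (A y)) \<le> M * t + M * (t + M * (2 * t / d))"
proof -
  let ?c = "cinner x y"
  have M0: "0 \<le> M" using v by auto
  have "norm (B y - cnj w *\<^sub>C y) = norm (A y - w *\<^sub>C y)"
    using normal_pair_norm_eq[OF normal_pair_shift[OF AB, of w], of y] by simp
  then have by': "norm (B y - cnj w *\<^sub>C y) \<le> t" using ay by simp
  have e1: "cinner (A x) y = cinner (A x - v *\<^sub>C x) y + v * ?c"
    by (simp add: cinner_diff_left cinner_scaleC_left)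
  have e2: "cinner (A x) y = cinner x (B y - cnj w *\<^sub>C y) + w * ?c"
    using AB by (simp add: normal_pair_def is_adjoint_def cinner_diff_right cinner_scaleC_right)
  have b1: "cmod (cinner (A x - v *\<^sub>C x) y) \<le> t"
    using norm_cinner_le[of "A x - v *\<^sub>C x" y] ny ax by simp
  have b2: "cmod (cinner x (B y - cnj w *\<^sub>C y)) \<le> t"
    using norm_cinner_le[of x "B y - cnj w *\<^sub>C y"] nx by' by simp
  have "(v - w) * ?c = cinner x (B y - cnj w *\<^sub>C y) - cinner (A x - v *\<^sub>C x) y"
    using e1 e2 by (simp add: algebra_simps)
  then have "cmod (v - w) * cmod ?c \<le> cmod (cinner x (B y - cnj w *\<^sub>C y))
      + cmod (cinner (A x - v *\<^sub>C x) y)"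
    by (metis norm_mult norm_triangle_ineq4)
  then have "cmod (v - w) * cmod ?c \<le> t + t"
    using b1 b2 by linarith
  moreover have "d * cmod ?c \<le> cmod (v - w) * cmod ?c" using d by (simp add: mult_right_mono)
  ultimately have "d * cmod ?c \<le> 2 * t" by linarith
  then show c: "cmod ?c \<le> 2 * t / d" using d by (simp add: field_simps)
  have "cmod (cinner (A x) y) \<le> cmod (cinner (A x - v *\<^sub>C x) y) + M * cmod ?c"
    using e1 norm_triangle_ineq[of "cinner (A x - v *\<^sub>C x) y" "v * ?c"] v by (simp add: norm_mult)
  also have "\<dots> \<le> t + M * (2 * t / d)"
    using b1 c M0 by (intro add_mono mult_left_mono)
  finally show c2: "cmod (cinner (A x) y) \<le> t + M * (2 * t / d)" .
  have "cinner (A x) (A y) = cinner (A x) (A y - w *\<^sub>C y) + cnj w * cinner (A x) y"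
    by (simp add: cinner_diff_right cinner_scaleC_right)
  then have "cmod (cinner (A x) (A y))
      \<le> norm (A x) * norm (A y - w *\<^sub>C y) + M * cmod (cinner (A x) y)"
    using norm_triangle_ineq[of "cinner (A x) (A y - w *\<^sub>C y)" "cnj w * cinner (A x) y"]
      norm_cinner_le[of "A x" "A y - w *\<^sub>C y"] w by (simp add: norm_mult)
  also have "\<dots> \<le> M * t + M * (t + M * (2 * t / d))"
    using bnd[of x] nx ay c2 M0 by (intro add_mono mult_mono mult_left_mono) auto
  finally show "cmod (cinner (A x) (A y)) \<le> M * t + M * (t + M * (2 * t / d))" .
qed

lemma approx_eigenvector_family_gram:
  fixes A :: "'a::complex_inner \<Rightarrow> 'a"
  assumes AB: "normal_pair A B" and bnd: "\<And>z. norm (A z) \<le> M * norm z"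
    and sM: "\<And>v. v \<in> s \<Longrightarrow> cmod v = M"
    and d: "d > 0" "\<And>v w. v \<in> s \<Longrightarrow> w \<in> s \<Longrightarrow> v \<noteq> w \<Longrightarrow> d \<le> cmod (v - w)"
    and X: "\<And>v. v \<in> s \<Longrightarrow> norm (X v) = 1" "\<And>v. v \<in> s \<Longrightarrow> norm (A (X v) - v *\<^sub>C X v) \<le> t"
    and vw: "v \<in> s" "w \<in> s"
  defines "C \<equiv> (1 + M)\<^sup>2 * (2 + 2 / d)"
  shows "cmod (cinner (X v) (X w) - (if v = w then 1 else 0)) \<le> t * C"
    and "cmod (cinner (A (X v)) (X w) - (if v = w then v else 0)) \<le> t * C"
    and "cmod (cinner (A (X v)) (A (X w)) - (if v = w then of_real (M\<^sup>2) else 0)) \<le> t * C"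
proof -
  have M: "0 \<le> M" using sM[OF vw(1)] by auto
  have t: "0 \<le> t" by (rule order_trans[OF norm_ge_zero X(2)[OF vw(1)]])
  define r where "r = 1 / d"
  have r: "0 \<le> r" "2 * t / d = 2 * (t * r)" unfolding r_def using d by simp_all
  have expand: "t * C = 2*t + 2*(t*r) + 4*(M*t) + 4*(M*(t*r)) + 2*(M\<^sup>2*t) + 2*(M\<^sup>2*(t*r))"
    using d unfolding C_def r_def by (simp add: power2_eq_square field_simps)
  have "0 \<le> t*r" "0 \<le> M*t" "0 \<le> M*(t*r)" "0 \<le> M\<^sup>2*t" "0 \<le> M\<^sup>2*(t*r)"
    using t r M by simp_all
  moreover have "t + M * (2 * t / d) = t + 2*(M*(t*r))"
    and "M * t + M * (t + M * (2 * t / d)) = 2*(M*t) + 2*(M\<^sup>2*(t*r))"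
    unfolding r(2) by (simp_all add: power2_eq_square algebra_simps)
  ultimately have C: "0 \<le> t * C" "t \<le> t * C" "2 * M * t \<le> t * C" "2 * t / d \<le> t * C"
    "t + M * (2 * t / d) \<le> t * C" "M * t + M * (t + M * (2 * t / d)) \<le> t * C"
    unfolding expand r(2) using t by linarith+
  note diag = approx_eigenvector_estimates[OF X(1)[OF vw(1)] X(2)[OF vw(1)] sM[OF vw(1)] bnd]
  note off = approx_eigenvectors_almost_orthogonal[OF AB X(1)[OF vw(1)] X(1)[OF vw(2)]
      X(2)[OF vw(1)] X(2)[OF vw(2)] sM[OF vw(1)] sM[OF vw(2)] bnd d(1) d(2)[OF vw]]
  show "cmod (cinner (X v) (X w) - (if v = w then 1 else 0)) \<le> t * C"
    and "cmod (cinner (A (X v)) (X w) - (if v = w then v else 0)) \<le> t * C"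
    and "cmod (cinner (A (X v)) (A (X w)) - (if v = w then of_real (M\<^sup>2) else 0)) \<le> t * C"
    using diag off C X(1)[OF vw(1)] by (auto simp: cinner_self)
qed

lemma weighted_superposition_estimates:
  fixes A :: "'a::complex_inner \<Rightarrow> 'a"
  assumes A: "bounded_clinear A" and s: "finite s"
    and u: "\<And>v. v \<in> s \<Longrightarrow> 0 \<le> u v" "sum u s = 1"
    and gram: "\<And>v w. v \<in> s \<Longrightarrow> w \<in> s \<Longrightarrow> cmod (cinner (X v) (X w) - (if v = w then 1 else 0)) \<le> \<eta>"
      "\<And>v w. v \<in> s \<Longrightarrow> w \<in> s \<Longrightarrow> cmod (cinner (A (X v)) (X w) - (if v = w then v else 0)) \<le> \<eta>"
      "\<And>v w. v \<in> s \<Longrightarrow> w \<in> s \<Longrightarrow>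
        cmod (cinner (A (X v)) (A (X w)) - (if v = w then of_real (M\<^sup>2) else 0)) \<le> \<eta>"
  defines "y \<equiv> \<Sum>v\<in>s. sqrt (u v) *\<^sub>R X v"
  shows "\<bar>(norm y)\<^sup>2 - 1\<bar> \<le> (real (card s))\<^sup>2 * \<eta>"
    and "\<bar>(norm (A y))\<^sup>2 - M\<^sup>2\<bar> \<le> (real (card s))\<^sup>2 * \<eta>"
    and "cmod (cinner (A y) y - (\<Sum>v\<in>s. u v *\<^sub>R v)) \<le> (real (card s))\<^sup>2 * \<eta>"
proof -
  define a where "a v = sqrt (u v)" for v
  have a: "0 \<le> a v \<and> a v \<le> 1" if "v \<in> s" for v
    using u that member_le_sum[of v s u] s unfolding a_def by auto
  have a2: "of_real ((a v)\<^sup>2) = complex_of_real (u v)" if "v \<in> s" for v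
    unfolding a_def using u(1)[OF that] by simp
  have y: "y = (\<Sum>v\<in>s. a v *\<^sub>R X v)" unfolding y_def a_def ..
  have Ay: "A y = (\<Sum>v\<in>s. a v *\<^sub>R A (X v))"
    unfolding y using bounded_clinear_linear[OF A] by (simp add: linear_sum linear_scale)
  have su: "(\<Sum>v\<in>s. of_real ((a v)\<^sup>2) * c) = c" for c :: complex
  proof -
    have "(\<Sum>v\<in>s. of_real ((a v)\<^sup>2) * c) = (\<Sum>v\<in>s. complex_of_real (u v)) * c"
      by (simp add: sum_distrib_right a2 del: of_real_power)
    also have "\<dots> = c" using u(2) by (metis mult_1 of_real_1 of_real_sum)
    finally show ?thesis .
  qed
  have sv: "(\<Sum>v\<in>s. of_real ((a v)\<^sup>2) * v) = (\<Sum>v\<in>s. u v *\<^sub>R v)"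
    by (rule sum.cong) (simp_all add: a2 scaleR_conv_of_real del: of_real_power)
  have cs: "cmod (cinner z z - of_real r) = \<bar>(norm z)\<^sup>2 - r\<bar>" for z :: 'a and r
    by (simp only: cinner_self of_real_diff[symmetric] norm_of_real)
  have "cmod (cinner y y - (\<Sum>v\<in>s. of_real ((a v)\<^sup>2) * 1)) \<le> (real (card s))\<^sup>2 * \<eta>"
    unfolding y by (rule cinner_superposition_near_diagonal[OF s a gram(1)])
  then show "\<bar>(norm y)\<^sup>2 - 1\<bar> \<le> (real (card s))\<^sup>2 * \<eta>"
    using cs[of y 1] unfolding su by simp
  have "cmod (cinner (A y) (A y) - (\<Sum>v\<in>s. of_real ((a v)\<^sup>2) * of_real (M\<^sup>2)))
      \<le> (real (card s))\<^sup>2 * \<eta>"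
    unfolding Ay by (rule cinner_superposition_near_diagonal[OF s a gram(3)])
  then show "\<bar>(norm (A y))\<^sup>2 - M\<^sup>2\<bar> \<le> (real (card s))\<^sup>2 * \<eta>"
    using cs[of "A y" "M\<^sup>2"] unfolding su by simp
  have "cmod (cinner (A y) y - (\<Sum>v\<in>s. of_real ((a v)\<^sup>2) * v)) \<le> (real (card s))\<^sup>2 * \<eta>"
    unfolding Ay unfolding y by (rule cinner_superposition_near_diagonal[OF s a gram(2)])
  then show "cmod (cinner (A y) y - (\<Sum>v\<in>s. u v *\<^sub>R v)) \<le> (real (card s))\<^sup>2 * \<eta>"
    unfolding sv .
qed

lemma convex_combination_near_max_numerical_range:
  fixes A :: "'a::chilbert_space \<Rightarrow> 'a"
  assumes AB: "normal_pair A B" and s: "finite s" "s \<subseteq> op_spectrum A \<inter> {z. cmod z = onorm A}"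
    and u: "\<And>v. v \<in> s \<Longrightarrow> 0 \<le> u v" "sum u s = 1" and e: "e > 0"
  obtains y where "\<bar>(norm y)\<^sup>2 - 1\<bar> \<le> e" "\<bar>(norm (A y))\<^sup>2 - (onorm A)\<^sup>2\<bar> \<le> e"
    "cmod (cinner (A y) y - (\<Sum>v\<in>s. u v *\<^sub>R v)) \<le> e"
proof -
  define M where "M = onorm A"
  have A: "bounded_clinear A" using AB by (simp add: normal_pair_def)
  have M0: "0 \<le> M" unfolding M_def by (rule bounded_clinear_onorm_nonneg[OF A])
  have bnd: "norm (A z) \<le> M * norm z" for z unfolding M_def by (rule bounded_clinear_norm_le[OF A])
  have sM: "cmod v = M" if "v \<in> s" for v using s(2) that unfolding M_def by auto
  obtain d where d: "d > 0" "\<And>v w. v \<in> s \<Longrightarrow> w \<in> s \<Longrightarrow> v \<noteq> w \<Longrightarrow> d \<le> cmod (v - w)"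
    using finite_set_separated[OF s(1)] by (metis dist_norm)
  define C where "C = (1 + M)\<^sup>2 * (2 + 2 / d)"
  have C0: "C > 0" unfolding C_def using d M0 by (simp add: add_pos_nonneg)
  define t where "t = e / ((real (card s))\<^sup>2 * C + 1)"
  have den: "(real (card s))\<^sup>2 * C + 1 > 0" using C0 by (simp add: add_nonneg_pos)
  have t0: "t > 0" unfolding t_def using e den by simp
  have tC: "(real (card s))\<^sup>2 * (t * C) \<le> e"
  proof -
    have "(real (card s))\<^sup>2 * (t * C) = e * ((real (card s))\<^sup>2 * C / ((real (card s))\<^sup>2 * C + 1))"
      unfolding t_def by (simp add: field_simps)
    also have "\<dots> \<le> e * 1" using e den C0 by (intro mult_left_mono) auto
    finally show ?thesis by simp
  qed
  have "\<forall>v\<in>s. \<exists>x. norm x = 1 \<and> norm (A x - v *\<^sub>C x) < t"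
    using normal_spectrum_approx_eigenvalue[OF AB] s(2) t0 unfolding approx_eigenvalue_def by blast
  then obtain X where X: "\<And>v. v \<in> s \<Longrightarrow> norm (X v) = 1"
    "\<And>v. v \<in> s \<Longrightarrow> norm (A (X v) - v *\<^sub>C X v) \<le> t"
    using bchoice[of s "\<lambda>v x. norm x = 1 \<and> norm (A x - v *\<^sub>C x) < t"] by (auto intro: less_imp_le)
  note gram = approx_eigenvector_family_gram[OF AB bnd sM d X, folded C_def]
  let ?y = "\<Sum>v\<in>s. sqrt (u v) *\<^sub>R X v"
  note est = weighted_superposition_estimates[OF A s(1) u gram(1) gram(2) gram(3)]
  have "\<bar>(norm ?y)\<^sup>2 - 1\<bar> \<le> (real (card s))\<^sup>2 * (t * C)" by (rule est(1))
  moreover have "\<bar>(norm (A ?y))\<^sup>2 - M\<^sup>2\<bar> \<le> (real (card s))\<^sup>2 * (t * C)" by (rule est(2))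
  moreover have "cmod (cinner (A ?y) ?y - (\<Sum>v\<in>s. u v *\<^sub>R v)) \<le> (real (card s))\<^sup>2 * (t * C)"
    by (rule est(3))
  ultimately have "\<bar>(norm ?y)\<^sup>2 - 1\<bar> \<le> e" "\<bar>(norm (A ?y))\<^sup>2 - (onorm A)\<^sup>2\<bar> \<le> e"
    "cmod (cinner (A ?y) ?y - (\<Sum>v\<in>s. u v *\<^sub>R v)) \<le> e"
    using tC unfolding M_def by linarith+
  then show ?thesis by (rule that)
qed

lemma normal_spectrum_hull_subset_max_numerical_range:
  fixes A :: "'a::chilbert_space \<Rightarrow> 'a"
  assumes ne: "\<exists>x::'a. x \<noteq> 0" and AB: "normal_pair A B"
  shows "convex hull (op_spectrum A \<inter> {z. cmod z = onorm A}) \<subseteq> max_numerical_range A"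
proof
  fix l assume "l \<in> convex hull (op_spectrum A \<inter> {z. cmod z = onorm A})"
  then obtain s u where s: "finite s" "s \<subseteq> op_spectrum A \<inter> {z. cmod z = onorm A}"
    and u: "\<forall>x\<in>s. 0 \<le> u x" "sum u s = 1" "(\<Sum>v\<in>s. u v *\<^sub>R v) = l"
    unfolding convex_hull_explicit by blast
  have A: "bounded_clinear A" using AB by (simp add: normal_pair_def)
  show "l \<in> max_numerical_range A"
  proof (rule max_numerical_range_approxI[OF A ne])
    fix e :: real assume "e > 0"
    then obtain y where "\<bar>(norm y)\<^sup>2 - 1\<bar> \<le> e" "\<bar>(norm (A y))\<^sup>2 - (onorm A)\<^sup>2\<bar> \<le> e"
      "cmod (cinner (A y) y - l) \<le> e"
      using convex_combination_near_max_numerical_range[OF AB s u(1)[rule_format] u(2)] u(3)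
      by blast
    then show "\<exists>y. \<bar>(norm y)\<^sup>2 - 1\<bar> \<le> e \<and> \<bar>(norm (A y))\<^sup>2 - (onorm A)\<^sup>2\<bar> \<le> e
        \<and> cmod (cinner (A y) y - l) \<le> e" by blast
  qed
qed

section \<open>Approximate joint eigenvectors of commuting hermitian operators\<close>

definition hermitian :: "('a::complex_inner \<Rightarrow> 'a) \<Rightarrow> bool" where
  "hermitian P \<longleftrightarrow> (\<forall>x y. cinner (P x) y = cinner x (P y))"

definition quad_form :: "('a::complex_inner \<Rightarrow> 'a) \<Rightarrow> 'a \<Rightarrow> real" where
  "quad_form P x = Re (cinner (P x) x)"

lemma hermitian_Re_cinner_commute: "hermitian P \<Longrightarrow> Re (cinner (P x) y) = Re (cinner (P y) x)"
  unfolding hermitian_def by (metis Re_cinner_commute)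

lemma hermitian_add: "hermitian P \<Longrightarrow> hermitian R \<Longrightarrow> hermitian (\<lambda>x. P x + R x)"
  unfolding hermitian_def by (simp add: cinner_add_left cinner_add_right)

lemma hermitian_diff: "hermitian P \<Longrightarrow> hermitian R \<Longrightarrow> hermitian (\<lambda>x. P x - R x)"
  unfolding hermitian_def by (simp add: cinner_diff_left cinner_diff_right)

lemma hermitian_const_scaleR: "hermitian P \<Longrightarrow> hermitian (\<lambda>x. r *\<^sub>R P x)"
  unfolding hermitian_def by (simp add: cinner_scaleR_left cinner_scaleR_right)

lemma hermitian_scaleR_ident: "hermitian (\<lambda>x. r *\<^sub>R x)"
  unfolding hermitian_def by (simp add: cinner_scaleR_left cinner_scaleR_right)

lemma hermitian_compose_self: "hermitian P \<Longrightarrow> hermitian (\<lambda>x. P (P x))"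
  unfolding hermitian_def by simp

lemma quad_form_compose_self:
  assumes "hermitian P"
  shows "quad_form (\<lambda>x. P (P x)) x = (norm (P x))\<^sup>2"
proof -
  have "cinner (P (P x)) x = cinner (P x) (P x)"
    using assms unfolding hermitian_def by blast
  then show ?thesis by (simp add: quad_form_def Re_cinner_self)
qed

lemma quad_form_scaleR: "linear P \<Longrightarrow> quad_form P (r *\<^sub>R x) = r\<^sup>2 * quad_form P x"
  by (simp add: quad_form_def linear_scale cinner_scaleR_left cinner_scaleR_right power2_eq_square)

lemma quad_form_add:
  assumes "linear P" "hermitian P"
  shows "quad_form P (u + v) = quad_form P u + 2 * Re (cinner (P u) v) + quad_form P v"
  using hermitian_Re_cinner_commute[OF assms(2), of v u]
  by (simp add: quad_form_def linear_add[OF assms(1)] cinner_add_left cinner_add_right)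

lemma quad_form_Cauchy_Schwarz:
  assumes P: "linear P" "hermitian P" and pos: "\<And>x. 0 \<le> quad_form P x"
  shows "(Re (cinner (P u) v))\<^sup>2 \<le> quad_form P u * quad_form P v"
proof -
  let ?c = "Re (cinner (P u) v)" and ?a = "quad_form P u" and ?b = "quad_form P v"
  have key: "0 \<le> ?a + 2 * t * ?c + t\<^sup>2 * ?b" for t
    using pos[of "u + t *\<^sub>R v"]
    by (simp add: quad_form_add[OF P] quad_form_scaleR[OF P(1)] linear_scale[OF P(1)]
        cinner_scaleR_right)
  show ?thesis
  proof (cases "?b = 0")
    case True
    have "?c = 0"
    proof (rule ccontr)
      assume c: "?c \<noteq> 0"
      have "0 \<le> ?a + 2 * (- (?a + 1) / (2 * ?c)) * ?c + (- (?a + 1) / (2 * ?c))\<^sup>2 * ?b"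
        by (rule key)
      also have "\<dots> = -1" using c True by (simp add: field_simps)
      finally show False by simp
    qed
    then show ?thesis using True by simp
  next
    case False
    then have b: "?b > 0" using pos[of v] by simp
    have "0 \<le> ?a + 2 * (- ?c / ?b) * ?c + (- ?c / ?b)\<^sup>2 * ?b" by (rule key)
    also have "\<dots> = ?a - ?c\<^sup>2 / ?b" using b by (simp add: field_simps power2_eq_square)
    finally show ?thesis using b by (simp add: field_simps mult.commute)
  qed
qed

lemma norm_power2_le_onorm_quad_form:
  assumes P: "bounded_linear P" "hermitian P" and pos: "\<And>x. 0 \<le> quad_form P x"
  shows "(norm (P u))\<^sup>2 \<le> onorm P * quad_form P u"
proof (cases "P u = 0")
  case True
  then show ?thesis using onorm_pos_le[OF P(1)] pos[of u] by simp
next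
  case False
  let ?n = "norm (P u)"
  have lin: "linear P" by (rule bounded_linear.linear[OF P(1)])
  have "(?n\<^sup>2)\<^sup>2 \<le> quad_form P u * quad_form P (P u)"
    using quad_form_Cauchy_Schwarz[OF lin P(2) pos, of u "P u"] by (simp add: Re_cinner_self)
  also have "\<dots> \<le> quad_form P u * (onorm P * ?n\<^sup>2)"
  proof (rule mult_left_mono[OF _ pos])
    have "quad_form P (P u) \<le> norm (P (P u)) * ?n"
      unfolding quad_form_def by (rule Re_cinner_le_norm)
    also have "\<dots> \<le> onorm P * ?n * ?n"
      using onorm[OF P(1), of "P u"] by (simp add: mult_right_mono)
    finally show "quad_form P (P u) \<le> onorm P * ?n\<^sup>2" by (simp add: power2_eq_square mult.assoc)
  qed
  finally have "?n\<^sup>2 * ?n\<^sup>2 \<le> (onorm P * quad_form P u) * ?n\<^sup>2"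
    by (simp add: power2_eq_square mult_ac)
  from mult_right_le_imp_le[OF this] show ?thesis using False by simp
qed

lemma quartic_bound:
  fixes a L \<delta> C \<eta> :: real
  assumes a: "0 \<le> a" and L: "1 \<le> L" and \<delta>: "0 < \<delta>" and C: "0 \<le> C" and \<eta>: "0 \<le> \<eta>"
    and \<eta>_le: "\<eta> \<le> \<delta>\<^sup>2 / (L * (C + 1))"
    and main: "L\<^sup>2 * a ^ 4 \<le> 2 * \<delta> * (\<delta> * a\<^sup>2 + C * \<eta> * a)"
  shows "L * a \<le> 2 * \<delta>"
proof (rule ccontr)
  define s where "s = L * a"
  assume "\<not> L * a \<le> 2 * \<delta>"
  then have s: "2 * \<delta> < s" unfolding s_def by simp
  have "0 < L * a" using s \<delta> unfolding s_def by simp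
  then have ap: "a > 0" using L by (simp add: zero_less_mult_iff)
  have "C * \<eta> * L \<le> \<eta> * (L * (C + 1))" using \<eta> L by (simp add: algebra_simps)
  also have "\<dots> \<le> \<delta>\<^sup>2"
    using mult_right_mono[OF \<eta>_le, of "L * (C + 1)"] L C by simp
  finally have h1: "C * \<eta> * L \<le> \<delta>\<^sup>2" .
  have h2: "s\<^sup>2 * a\<^sup>2 \<le> 2 * \<delta>\<^sup>2 * a\<^sup>2 + 2 * \<delta> * C * \<eta> * a"
    using main unfolding s_def by (simp add: power2_eq_square algebra_simps power4_eq_xxxx)
  have "(2 * \<delta>)\<^sup>2 < s\<^sup>2" by (rule power_strict_mono) (use s \<delta> in auto)
  then have "4 * \<delta>\<^sup>2 * a\<^sup>2 < s\<^sup>2 * a\<^sup>2" using ap by (simp add: power2_eq_square)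
  then have "s\<^sup>2 * a * a < (4 * \<delta> * C * \<eta>) * a" using h2 by (simp add: power2_eq_square mult_ac)
  then have "s\<^sup>2 * a * L < 4 * \<delta> * C * \<eta> * L" using ap L by simp
  then have "s ^ 3 < 4 * \<delta> * (C * \<eta> * L)"
    unfolding s_def by (simp add: power3_eq_cube power2_eq_square mult_ac)
  also have "\<dots> \<le> 4 * \<delta> * \<delta>\<^sup>2" using h1 \<delta> by simp
  finally have "s ^ 3 < (2 * \<delta>) ^ 3 / 2" by (simp add: power3_eq_cube power2_eq_square)
  moreover have "(2 * \<delta>) ^ 3 < s ^ 3" by (rule power_strict_mono) (use s \<delta> in auto)
  moreover have "0 < (2 * \<delta>) ^ 3" using \<delta> by simp
  ultimately show False by linarith
qed

text \<open>Approximate joint eigenvectors of commuting hermitian \<open>T\<close> and \<open>Q \<ge> 0\<close> are found by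
  maximising the penalised form \<open>\<langle>Tx,x\<rangle> - K \<langle>Qx,x\<rangle>\<close> on the unit sphere and letting \<open>K \<rightarrow> \<infinity>\<close>;
  this replaces the spectral theorem.\<close>

locale hermitian_penalty =
  fixes T Q :: "'a::complex_inner \<Rightarrow> 'a"
  assumes T: "bounded_linear T" "hermitian T"
    and Q: "bounded_linear Q" "hermitian Q"
    and commute: "\<And>x. T (Q x) = Q (T x)"
    and Q_nonneg: "\<And>x. 0 \<le> quad_form Q x"
    and nontrivial: "\<exists>x::'a. x \<noteq> 0"
begin

definition penalized :: "real \<Rightarrow> 'a \<Rightarrow> real" where
  "penalized K x = quad_form T x - K * quad_form Q x"

definition penalized_max :: "real \<Rightarrow> real" where
  "penalized_max K = (SUP x\<in>{x. norm x = 1}. penalized K x)"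

lemma sphere_nonempty: "{x::'a. norm x = 1} \<noteq> {}"
proof -
  obtain x :: 'a where "x \<noteq> 0" using nontrivial by blast
  then have "norm ((1 / norm x) *\<^sub>R x) = 1" by simp
  then show ?thesis by blast
qed

lemma penalized_le_max:
  assumes "0 \<le> K" "norm x = 1"
  shows "penalized K x \<le> penalized_max K"
  unfolding penalized_max_def
proof (rule cSUP_upper)
  have "penalized K y \<le> onorm T" if "norm y = 1" for y
  proof -
    have "quad_form T y \<le> norm (T y) * norm y"
      unfolding quad_form_def by (rule Re_cinner_le_norm)
    also have "\<dots> \<le> onorm T" using onorm[OF T(1), of y] that by simp
    finally show ?thesis
      using mult_nonneg_nonneg[OF assms(1) Q_nonneg[of y]] unfolding penalized_def by linarith
  qed
  then show "bdd_above (penalized K ` {x. norm x = 1})" by (intro bdd_aboveI2) auto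
qed (use assms in simp)

lemma penalized_max_approx:
  assumes "\<eta> > 0"
  obtains x where "norm x = 1" "penalized_max K - \<eta> < penalized K x"
  using less_cSupD[of "penalized K ` {x. norm x = 1}" "penalized_max K - \<eta>"] sphere_nonempty assms
  unfolding penalized_max_def by auto

lemma penalized_le_max_norm:
  assumes "0 \<le> K"
  shows "penalized K x \<le> penalized_max K * (norm x)\<^sup>2"
proof (cases "x = 0")
  case True
  then show ?thesis
    by (simp add: penalized_def quad_form_def linear_0[OF bounded_linear.linear[OF T(1)]]
        linear_0[OF bounded_linear.linear[OF Q(1)]])
next
  case False
  define u where "u = (1 / norm x) *\<^sub>R x"
  have u: "norm u = 1" and x: "x = norm x *\<^sub>R u" unfolding u_def using False by simp_all
  have "penalized K x = (norm x)\<^sup>2 * penalized K u"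
    by (subst x) (simp add: penalized_def quad_form_scaleR bounded_linear.linear T(1) Q(1)
        algebra_simps)
  also have "\<dots> \<le> (norm x)\<^sup>2 * penalized_max K"
    using penalized_le_max[OF assms u] by (simp add: mult_left_mono)
  finally show ?thesis by (simp add: mult.commute)
qed

lemma penalized_max_antimono:
  assumes "0 \<le> K" "K \<le> K2"
  shows "penalized_max K2 \<le> penalized_max K"
  unfolding penalized_max_def[of K2]
proof (rule cSUP_least[OF sphere_nonempty])
  fix x :: 'a assume "x \<in> {x. norm x = 1}"
  then have "penalized K2 x \<le> penalized K x"
    using assms Q_nonneg[of x] unfolding penalized_def by (simp add: mult_right_mono)
  also have "\<dots> \<le> penalized_max K" using penalized_le_max assms \<open>x \<in> _\<close> by simp
  finally show "penalized K2 x \<le> penalized_max K" .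
qed

text \<open>Near-maximisers are approximate eigenvectors of \<open>T - K Q\<close>: the gap operator
  \<open>penalized_max K - (T - K Q)\<close> is positive, so it is small on vectors where its form is small.\<close>

lemma near_maximizer_approx_eigenvector:
  assumes K: "0 \<le> K" and \<eta>: "\<eta> > 0"
  obtains y where "norm y = 1" "penalized_max K - \<eta> < penalized K y"
    "norm (T y - K *\<^sub>R Q y - penalized_max K *\<^sub>R y) < \<eta>"
proof -
  define P where "P = (\<lambda>x. penalized_max K *\<^sub>R x - (T x - K *\<^sub>R Q x))"
  have P: "bounded_linear P" "hermitian P" unfolding P_def
    by (intro bounded_linear_sub bounded_linear_scaleR_right T(1) bounded_linear_const_scaleR Q(1)
        hermitian_diff hermitian_scaleR_ident T(2) hermitian_const_scaleR Q(2))+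
  have qP: "quad_form P x = penalized_max K * (norm x)\<^sup>2 - penalized K x" for x
    unfolding quad_form_def P_def penalized_def
    by (simp add: cinner_diff_left cinner_scaleR_left Re_cinner_self)
  have P_nonneg: "0 \<le> quad_form P x" for x
    using penalized_le_max_norm[OF K, of x] qP[of x] by simp
  define \<eta>' where "\<eta>' = min \<eta> (\<eta>\<^sup>2 / (onorm P + 1))"
  have P0: "0 \<le> onorm P" by (rule onorm_pos_le[OF P(1)])
  have \<eta>': "0 < \<eta>'" "\<eta>' \<le> \<eta>" "onorm P * \<eta>' < \<eta>\<^sup>2"
  proof -
    show "0 < \<eta>'" "\<eta>' \<le> \<eta>" unfolding \<eta>'_def using \<eta> P0 by auto
    have "\<eta>' \<le> \<eta>\<^sup>2 / (onorm P + 1)" unfolding \<eta>'_def by simp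
    then have "onorm P * \<eta>' \<le> onorm P * (\<eta>\<^sup>2 / (onorm P + 1))"
      using P0 by (rule mult_left_mono)
    also have "\<dots> < \<eta>\<^sup>2" using \<eta> P0 by (simp add: field_simps)
    finally show "onorm P * \<eta>' < \<eta>\<^sup>2" .
  qed
  obtain y where y: "norm y = 1" "penalized_max K - \<eta>' < penalized K y"
    using penalized_max_approx[OF \<eta>'(1)] by blast
  have "(norm (P y))\<^sup>2 \<le> onorm P * quad_form P y"
    by (rule norm_power2_le_onorm_quad_form[OF P P_nonneg])
  also have "\<dots> \<le> onorm P * \<eta>'"
    using qP[of y] y P0 by (simp add: mult_left_mono)
  also have "\<dots> < \<eta>\<^sup>2" by (rule \<eta>'(3))
  finally have "norm (P y) < \<eta>" using \<eta> by (simp add: power_less_imp_less_base)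
  moreover have "T y - K *\<^sub>R Q y - penalized_max K *\<^sub>R y = - P y"
    unfolding P_def by (simp add: algebra_simps)
  ultimately show ?thesis using that y \<eta>'(2) by simp
qed


lemma quad_form_Q_image_le:
  assumes K': "0 \<le> K'"
  shows "(K - K') * quad_form Q (Q y)
    \<le> (penalized_max K' - penalized_max K) * (norm (Q y))\<^sup>2
      + onorm Q * norm (T y - K *\<^sub>R Q y - penalized_max K *\<^sub>R y) * norm (Q y)"
proof -
  define e where "e = T y - K *\<^sub>R Q y - penalized_max K *\<^sub>R y"
  define z where "z = Q y"
  have Q_lin: "linear Q" using Q(1) by (simp add: bounded_linear.linear)
  have "T y = e + K *\<^sub>R z + penalized_max K *\<^sub>R y" unfolding e_def z_def by simp
  then have Tz: "T z = Q e + K *\<^sub>R Q z + penalized_max K *\<^sub>R z"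
    unfolding z_def commute by (simp add: linear_add[OF Q_lin] linear_scale[OF Q_lin])
  have "- Re (cinner (Q e) z) \<le> norm (Q e) * norm z"
    using abs_Re_cinner_le_norm[of "Q e" z] by linarith
  also have "\<dots> \<le> onorm Q * norm e * norm z"
    using onorm[OF Q(1), of e] by (simp add: mult_right_mono)
  finally have Qe: "- Re (cinner (Q e) z) \<le> onorm Q * norm e * norm z" .
  have "quad_form T z = Re (cinner (Q e) z) + K * quad_form Q z + penalized_max K * (norm z)\<^sup>2"
    unfolding quad_form_def Tz by (simp add: cinner_add_left cinner_scaleR_left Re_cinner_self)
  then have "(K - K') * quad_form Q z
      = penalized K' z - Re (cinner (Q e) z) - penalized_max K * (norm z)\<^sup>2"
    unfolding penalized_def by (simp add: algebra_simps)
  also have "\<dots> \<le> (penalized_max K' - penalized_max K) * (norm z)\<^sup>2 + onorm Q * norm e * norm z"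
    using penalized_le_max_norm[OF K', of z] Qe by (simp add: algebra_simps)
  finally show ?thesis unfolding e_def z_def .
qed

text \<open>If \<open>penalized_max\<close> has almost stopped decreasing between \<open>K'\<close> and \<open>K\<close>, a near-maximiser
  for \<open>K\<close> is almost annihilated by \<open>Q\<close>: Cauchy--Schwarz for \<open>Q\<close> combines the bounds on \<open>\<langle>Qy,y\<rangle>\<close>
  and \<open>\<langle>Q\<^sup>2y,Qy\<rangle>\<close> into a quartic inequality for \<open>\<parallel>Qy\<parallel>\<close>.\<close>

lemma near_maximizer_Q_small:
  assumes K': "0 \<le> K'" and L: "1 \<le> K - K'"
    and y: "norm y = 1" "penalized_max K - \<eta> < penalized K y"
    and ev: "norm (T y - K *\<^sub>R Q y - penalized_max K *\<^sub>R y) \<le> \<eta>"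
    and gap: "penalized_max K' - penalized_max K \<le> \<delta>" and \<delta>: "0 < \<delta>"
    and \<eta>: "0 \<le> \<eta>" "\<eta> \<le> \<delta>" "\<eta> \<le> \<delta>\<^sup>2 / ((K - K') * (onorm Q + 1))"
  shows "(K - K') * quad_form Q y \<le> 2 * \<delta>" and "(K - K') * norm (Q y) \<le> 2 * \<delta>"
proof -
  define L where "L = K - K'"
  define a where "a = norm (Q y)"
  have "penalized K' y - penalized K y = L * quad_form Q y"
    unfolding penalized_def L_def by (simp add: algebra_simps)
  then have L_qy: "L * quad_form Q y \<le> 2 * \<delta>"
    using penalized_le_max[OF K' y(1)] y(2) gap \<eta>(2) by linarith
  then show "(K - K') * quad_form Q y \<le> 2 * \<delta>" unfolding L_def .
  have "(penalized_max K' - penalized_max K) * a\<^sup>2 \<le> \<delta> * a\<^sup>2"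
    using gap by (rule mult_right_mono) simp
  moreover have "onorm Q * norm (T y - K *\<^sub>R Q y - penalized_max K *\<^sub>R y) * a \<le> onorm Q * \<eta> * a"
    using ev onorm_pos_le[OF Q(1)] unfolding a_def by (intro mult_right_mono mult_left_mono) auto
  ultimately have L_qQy: "L * quad_form Q (Q y) \<le> \<delta> * a\<^sup>2 + onorm Q * \<eta> * a"
    using quad_form_Q_image_le[OF K', of K y] unfolding L_def a_def by linarith
  have prod: "(L * quad_form Q y) * (L * quad_form Q (Q y)) \<le> (2 * \<delta>) * (\<delta> * a\<^sup>2 + onorm Q * \<eta> * a)"
    by (rule mult_mono[OF L_qy L_qQy]) (use L Q_nonneg[of "Q y"] \<delta> in \<open>auto simp: L_def\<close>)
  have "(a\<^sup>2)\<^sup>2 \<le> quad_form Q y * quad_form Q (Q y)"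
    using quad_form_Cauchy_Schwarz[OF bounded_linear.linear[OF Q(1)] Q(2) Q_nonneg, of y "Q y"]
    unfolding a_def by (simp add: Re_cinner_self)
  then have "L\<^sup>2 * (a\<^sup>2)\<^sup>2 \<le> L\<^sup>2 * (quad_form Q y * quad_form Q (Q y))"
    by (rule mult_left_mono) simp
  then have "L\<^sup>2 * a ^ 4 \<le> (2 * \<delta>) * (\<delta> * a\<^sup>2 + onorm Q * \<eta> * a)"
    using prod by (simp add: power2_eq_square mult_ac power4_eq_xxxx)
  then have "L * a \<le> 2 * \<delta>"
    using quartic_bound[OF _ _ \<delta> onorm_pos_le[OF Q(1)] \<eta>(1)] \<eta>(3) L unfolding L_def a_def
    by (simp add: mult.assoc)
  then show "(K - K') * norm (Q y) \<le> 2 * \<delta>" unfolding L_def a_def .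
qed

lemma penalized_max_ge:
  assumes approx: "\<And>e. e > 0 \<Longrightarrow> \<exists>x. norm x = 1 \<and> quad_form Q x < e \<and> \<beta> - e < quad_form T x"
    and K: "0 \<le> K"
  shows "\<beta> \<le> penalized_max K"
proof (rule ccontr)
  assume "\<not> \<beta> \<le> penalized_max K"
  define \<eta> where "\<eta> = (\<beta> - penalized_max K) / (K + 1)"
  have \<eta>: "\<eta> > 0" "(K + 1) * \<eta> = \<beta> - penalized_max K"
    unfolding \<eta>_def using \<open>\<not> \<beta> \<le> _\<close> K by auto
  obtain x where x: "norm x = 1" "quad_form Q x < \<eta>" "\<beta> - \<eta> < quad_form T x"
    using approx[OF \<eta>(1)] by blast
  have "K * quad_form Q x \<le> K * \<eta>" using x(2) K by (simp add: mult_left_mono)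
  then have "penalized_max K < penalized K x"
    using x(3) \<eta>(2) unfolding penalized_def by (simp add: algebra_simps)
  then show False using penalized_le_max[OF K x(1)] by simp
qed

text \<open>The choice \<open>K = 2k + 1\<close>, \<open>K' = k\<close> keeps \<open>K \<le> 2 (K - K')\<close>, so the bound of
  \<open>near_maximizer_Q_small\<close> on \<open>(K - K') \<parallel>Qy\<parallel>\<close> also controls \<open>K \<parallel>Qy\<parallel>\<close>.\<close>

lemma approx_joint_eigenvector_at_limit:
  assumes b: "\<And>k::nat. b \<le> penalized_max (real k)" and k: "penalized_max (real k) < b + e / 8"
    and e: "e > 0"
  obtains y where "norm y = 1" "quad_form Q y < e" "norm (T y - b *\<^sub>R y) < e"
proof -
  define \<delta> where "\<delta> = e / 8"
  have \<delta>: "\<delta> > 0" unfolding \<delta>_def using e by simp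
  define K where "K = real (2 * k + 1)"
  have L: "K - real k = real k + 1" "1 \<le> K - real k" "K \<le> 2 * (K - real k)"
    unfolding K_def by simp_all
  have gap: "penalized_max (real k) - penalized_max K \<le> \<delta>" "penalized_max K - b < \<delta>"
    using k b[of "2 * k + 1"] penalized_max_antimono[of "real k" K] unfolding K_def \<delta>_def by auto
  define \<eta> where "\<eta> = min \<delta> (\<delta>\<^sup>2 / ((K - real k) * (onorm Q + 1)))"
  have \<eta>: "0 < \<eta>" "\<eta> \<le> \<delta>" "\<eta> \<le> \<delta>\<^sup>2 / ((K - real k) * (onorm Q + 1))"
    unfolding \<eta>_def using \<delta> L(1) onorm_pos_le[OF Q(1)] by auto
  obtain y where y: "norm y = 1" "penalized_max K - \<eta> < penalized K y"
    "norm (T y - K *\<^sub>R Q y - penalized_max K *\<^sub>R y) < \<eta>"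
    using near_maximizer_approx_eigenvector[OF _ \<eta>(1), of K] unfolding K_def by auto
  note Q_small = near_maximizer_Q_small[OF of_nat_0_le_iff L(2) y(1,2) less_imp_le[OF y(3)]
      gap(1) \<delta> less_imp_le[OF \<eta>(1)] \<eta>(2,3)]
  have "quad_form Q y \<le> (K - real k) * quad_form Q y"
    using L(1) Q_nonneg[of y] by (simp add: mult_le_cancel_right1)
  then have Qy: "quad_form Q y < e" using Q_small(1) \<delta> unfolding \<delta>_def by linarith
  have "K * norm (Q y) \<le> 2 * ((K - real k) * norm (Q y))"
    using mult_right_mono[OF L(3), of "norm (Q y)"] by (simp only: mult.assoc norm_ge_zero)
  then have KQ: "K * norm (Q y) \<le> 4 * \<delta>" using Q_small(2) by linarith
  let ?r = "T y - K *\<^sub>R Q y - penalized_max K *\<^sub>R y"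
  have split: "T y - b *\<^sub>R y = (?r + K *\<^sub>R Q y) + (penalized_max K - b) *\<^sub>R y"
    by (simp add: algebra_simps)
  have "norm (T y - b *\<^sub>R y) \<le> norm ?r + norm (K *\<^sub>R Q y) + norm ((penalized_max K - b) *\<^sub>R y)"
    unfolding split using norm_triangle_ineq[of "?r + K *\<^sub>R Q y" "(penalized_max K - b) *\<^sub>R y"]
      norm_triangle_ineq[of ?r "K *\<^sub>R Q y"] by linarith
  also have "\<dots> = norm ?r + K * norm (Q y) + (penalized_max K - b)"
    using y(1) b[of "2 * k + 1"] unfolding K_def by simp
  finally have "norm (T y - b *\<^sub>R y) \<le> norm ?r + K * norm (Q y) + (penalized_max K - b)" .
  then have "norm (T y - b *\<^sub>R y) < e"
    using y(3) \<eta>(2) gap(2) KQ e unfolding \<delta>_def by linarith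
  then show ?thesis using that y(1) Qy by blast
qed

theorem approx_joint_eigenvector:
  assumes approx: "\<And>e. e > 0 \<Longrightarrow> \<exists>x. norm x = 1 \<and> quad_form Q x < e \<and> \<beta> - e < quad_form T x"
  obtains b where "\<beta> \<le> b"
    "\<And>e. e > 0 \<Longrightarrow> \<exists>y. norm y = 1 \<and> quad_form Q y < e \<and> norm (T y - b *\<^sub>R y) < e"
proof -
  define b where "b = Inf (range (\<lambda>k::nat. penalized_max (real k)))"
  note \<beta>_le = penalized_max_ge[OF approx]
  have bdd: "bdd_below (range (\<lambda>k::nat. penalized_max (real k)))"
    using \<beta>_le by (intro bdd_belowI2[where m=\<beta>]) simp
  have b_le: "b \<le> penalized_max (real k)" for k unfolding b_def by (rule cInf_lower) (use bdd in auto)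
  have "\<beta> \<le> b" unfolding b_def by (rule cInf_greatest) (use \<beta>_le in auto)
  moreover have "\<exists>y. norm y = 1 \<and> quad_form Q y < e \<and> norm (T y - b *\<^sub>R y) < e" if e: "e > 0" for e
  proof -
    obtain k where "penalized_max (real k) < b + e / 8"
      using cInf_lessD[of "range (\<lambda>k::nat. penalized_max (real k))" "b + e / 8"] e
      unfolding b_def by auto
    from approx_joint_eigenvector_at_limit[OF b_le this e] show ?thesis by blast
  qed
  ultimately show ?thesis using that by blast
qed

end

section \<open>Supporting spectral points of the maximal numerical range\<close>

definition re_part :: "('a::complex_inner \<Rightarrow> 'a) \<Rightarrow> ('a \<Rightarrow> 'a) \<Rightarrow> 'a \<Rightarrow> 'a" where
  "re_part N N' x = (1/2) *\<^sub>C (N x + N' x)"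

definition im_part :: "('a::complex_inner \<Rightarrow> 'a) \<Rightarrow> ('a \<Rightarrow> 'a) \<Rightarrow> 'a \<Rightarrow> 'a" where
  "im_part N N' x = (- \<i>/2) *\<^sub>C (N x - N' x)"

definition norm_defect :: "real \<Rightarrow> ('a::complex_inner \<Rightarrow> 'a) \<Rightarrow> ('a \<Rightarrow> 'a) \<Rightarrow> 'a \<Rightarrow> 'a" where
  "norm_defect M N N' x = complex_of_real (M\<^sup>2) *\<^sub>C x - N' (N x)"

lemma normal_pair_re_im_parts:
  assumes NN': "normal_pair N N'"
  shows "bounded_clinear (re_part N N')" "bounded_clinear (im_part N N')"
    and "hermitian (re_part N N')" "hermitian (im_part N N')"
    and "\<And>x. im_part N N' (re_part N N' x) = re_part N N' (im_part N N' x)"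
    and "\<And>x. N x = re_part N N' x + \<i> *\<^sub>C im_part N N' x"
    and "\<And>x. quad_form (re_part N N') x = Re (cinner (N x) x)"
proof -
  have N: "bounded_clinear N" and N': "bounded_clinear N'" and adj: "is_adjoint N N'"
    and comm: "\<And>x. N (N' x) = N' (N x)"
    using NN' by (auto simp: normal_pair_def)
  have re: "re_part N N' = (\<lambda>x. (1/2) *\<^sub>C (N x + N' x))" by (simp add: re_part_def fun_eq_iff)
  have im: "im_part N N' = (\<lambda>x. (- \<i>/2) *\<^sub>C (N x - N' x))" by (simp add: im_part_def fun_eq_iff)
  show "bounded_clinear (re_part N N')" unfolding re
    by (rule bounded_clinear_const_scaleC[OF bounded_clinear_add[OF N N']])
  show "bounded_clinear (im_part N N')" unfolding im
    by (rule bounded_clinear_const_scaleC[OF bounded_clinear_diff[OF N N']])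
  have adj': "cinner (N' x) y = cinner x (N y)" for x y by (rule is_adjoint_sym[OF adj])
  have adjN: "cinner (N x) y = cinner x (N' y)" for x y using adj unfolding is_adjoint_def by simp
  show "hermitian (re_part N N')" unfolding hermitian_def re_part_def
    by (simp add: cinner_scaleC_left cinner_scaleC_right cinner_add_left cinner_add_right adj' adjN)
  show "hermitian (im_part N N')" unfolding hermitian_def im_part_def
    by (simp add: cinner_scaleC_left cinner_scaleC_right cinner_diff_left cinner_diff_right
        adj' adjN algebra_simps)
  show "im_part N N' (re_part N N' x) = re_part N N' (im_part N N' x)" for x
    unfolding re_part_def im_part_def
    by (simp add: linear_add[OF bounded_clinear_linear[OF N]] linear_add[OF bounded_clinear_linear[OF N']]
        linear_diff[OF bounded_clinear_linear[OF N]] linear_diff[OF bounded_clinear_linear[OF N']]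
        bounded_clinear_scaleC[OF N] bounded_clinear_scaleC[OF N']
        scaleC_add_right scaleC_diff_right scaleC_scaleC comm)
  show "N x = re_part N N' x + \<i> *\<^sub>C im_part N N' x" for x
  proof -
    have "re_part N N' x + \<i> *\<^sub>C im_part N N' x = (1/2) *\<^sub>C N x + (1/2) *\<^sub>C N x"
      unfolding re_part_def im_part_def by (simp add: scaleC_scaleC scaleC_add_right scaleC_diff_right)
    also have "\<dots> = (1/2 + 1/2) *\<^sub>C N x" by (rule scaleC_add_left[symmetric])
    finally show ?thesis by (simp add: scaleC_one)
  qed
  show "quad_form (re_part N N') x = Re (cinner (N x) x)" for x
  proof -
    have "cinner (N' x) x = cnj (cinner (N x) x)"
      using adj'[of x x] cinner_commute[of x "N x"] by simp
    then show ?thesis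
      unfolding quad_form_def re_part_def by (simp add: cinner_scaleC_left cinner_add_left)
  qed
qed

lemma normal_pair_norm_defect:
  assumes NN': "normal_pair N N'"
  shows "bounded_clinear (norm_defect M N N')" "hermitian (norm_defect M N N')"
    and "\<And>x. re_part N N' (norm_defect M N N' x) = norm_defect M N N' (re_part N N' x)"
    and "\<And>x. im_part N N' (norm_defect M N N' x) = norm_defect M N N' (im_part N N' x)"
    and "\<And>x. quad_form (norm_defect M N N') x = M\<^sup>2 * (norm x)\<^sup>2 - (norm (N x))\<^sup>2"
proof -
  have N: "bounded_clinear N" and N': "bounded_clinear N'" and adj: "is_adjoint N N'"
    and comm: "\<And>x. N (N' x) = N' (N x)"
    using NN' by (auto simp: normal_pair_def)
  have "norm_defect M N N' = (\<lambda>x. complex_of_real (M\<^sup>2) *\<^sub>C x - N' (N x))"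
    by (simp add: norm_defect_def fun_eq_iff)
  then show "bounded_clinear (norm_defect M N N')"
    using bounded_clinear_diff[OF bounded_clinear_scaleC_ident bounded_clinear_compose[OF N' N]] by simp
  have adj': "cinner (N' x) y = cinner x (N y)" for x y by (rule is_adjoint_sym[OF adj])
  have adjN: "cinner (N x) y = cinner x (N' y)" for x y using adj unfolding is_adjoint_def by simp
  show "hermitian (norm_defect M N N')" unfolding hermitian_def norm_defect_def
    by (simp add: cinner_scaleC_left cinner_scaleC_right cinner_diff_left cinner_diff_right adj' adjN)
  note lin = linear_add[OF bounded_clinear_linear[OF N]] linear_add[OF bounded_clinear_linear[OF N']]
    linear_diff[OF bounded_clinear_linear[OF N]] linear_diff[OF bounded_clinear_linear[OF N']]
    bounded_clinear_scaleC[OF N] bounded_clinear_scaleC[OF N']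
  show "re_part N N' (norm_defect M N N' x) = norm_defect M N N' (re_part N N' x)" for x
    unfolding re_part_def norm_defect_def
    by (simp add: lin scaleC_add_right scaleC_diff_right scaleC_scaleC comm algebra_simps)
  show "im_part N N' (norm_defect M N N' x) = norm_defect M N N' (im_part N N' x)" for x
    unfolding im_part_def norm_defect_def
    by (simp add: lin scaleC_add_right scaleC_diff_right scaleC_scaleC comm algebra_simps)
  show "quad_form (norm_defect M N N') x = M\<^sup>2 * (norm x)\<^sup>2 - (norm (N x))\<^sup>2" for x
    using adj'[of "N x" x]
    unfolding quad_form_def norm_defect_def by (simp add: cinner_diff_left cinner_scaleC_left cinner_self)
qed

lemma quad_form_norm_defect_nonneg:
  assumes "normal_pair N N'" and "\<And>x. norm (N x) \<le> M * norm x"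
  shows "0 \<le> quad_form (norm_defect M N N') x"
  using normal_pair_norm_defect(5)[OF assms(1), of M x] power_mono[OF assms(2)[of x] norm_ge_zero]
  by (simp add: power_mult_distrib)

lemma quad_form_norm_defect_unit:
  assumes "normal_pair N N'" and "norm x = 1"
  shows "quad_form (norm_defect M N N') x = (M - norm (N x)) * (M + norm (N x))"
  using normal_pair_norm_defect(5)[OF assms(1), of M x] assms(2)
  by (simp add: power2_eq_square algebra_simps)

text \<open>First application of \<open>approx_joint_eigenvector\<close>: the real part penalised by the norm
  defect \<open>M\<^sup>2 - N\<^sup>*N\<close>, which is small exactly on almost norming vectors.\<close>

lemma re_part_approx_eigenvalue:
  fixes N :: "'a::complex_inner \<Rightarrow> 'a"
  assumes NN': "normal_pair N N'" and bnd: "\<And>x. norm (N x) \<le> M * norm x"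
    and approx: "\<And>e. e > 0 \<Longrightarrow> \<exists>x. norm x = 1 \<and> M - norm (N x) < e \<and> \<beta> - e < Re (cinner (N x) x)"
  obtains b where "\<beta> \<le> b" "\<And>e. e > 0 \<Longrightarrow> \<exists>y. norm y = 1 \<and>
    quad_form (norm_defect M N N') y < e \<and> norm (re_part N N' y - b *\<^sub>R y) < e"
proof -
  note re_im = normal_pair_re_im_parts[OF NN'] and defect = normal_pair_norm_defect[OF NN', of M]
  obtain x0 :: 'a where x0: "norm x0 = 1" using approx[of 1] by auto
  then have ne: "\<exists>x::'a. x \<noteq> 0" by (intro exI[of _ x0]) auto
  have M: "0 \<le> M" using order_trans[OF norm_ge_zero bnd[of x0]] x0 by simp
  interpret hermitian_penalty "re_part N N'" "norm_defect M N N'"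
    by (rule hermitian_penalty.intro) (use re_im(1,3) defect(1,2,3) ne
        quad_form_norm_defect_nonneg[OF NN' bnd] in \<open>auto intro: bounded_clinear_bounded_linear\<close>)
  have "\<exists>x. norm x = 1 \<and> quad_form (norm_defect M N N') x < e \<and> \<beta> - e < quad_form (re_part N N') x"
    if e: "e > 0" for e
  proof -
    define e' where "e' = e / (2 * M + 1)"
    have e': "e' > 0" "e' * (2 * M + 1) = e" "e' \<le> e" unfolding e'_def using e M by (auto simp: field_simps)
    obtain x where x: "norm x = 1" "M - norm (N x) < e'" "\<beta> - e' < Re (cinner (N x) x)"
      using approx[OF e'(1)] by blast
    have "quad_form (norm_defect M N N') x \<le> (M - norm (N x)) * (2 * M + 1)"
      unfolding quad_form_norm_defect_unit[OF NN' x(1)] using bnd[of x] x(1) M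
      by (intro mult_left_mono) auto
    also have "\<dots> < e' * (2 * M + 1)" using x(2) M by (intro mult_strict_right_mono) auto
    finally show ?thesis
      using x e' re_im(7) by (intro exI[of _ x]) auto
  qed
  then show ?thesis using approx_joint_eigenvector that by blast
qed

lemma re_part_shift_square:
  fixes N N' :: "'a::complex_inner \<Rightarrow> 'a" and b :: real
  assumes NN': "normal_pair N N'"
  defines "R \<equiv> \<lambda>x. re_part N N' x - b *\<^sub>R x"
  shows "bounded_linear (\<lambda>x. R (R x))" "hermitian (\<lambda>x. R (R x))"
    and "\<And>x. im_part N N' (R (R x)) = R (R (im_part N N' x))"
    and "\<And>x. quad_form (\<lambda>x. R (R x)) x = (norm (R x))\<^sup>2"
proof -
  note re_im = normal_pair_re_im_parts[OF NN']
  have R: "bounded_linear R" "hermitian R" unfolding R_def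
    by (rule bounded_linear_sub[OF bounded_clinear_bounded_linear[OF re_im(1)] bounded_linear_scaleR_right])
      (rule hermitian_diff[OF re_im(3) hermitian_scaleR_ident])
  show "bounded_linear (\<lambda>x. R (R x))" by (rule bounded_linear_compose[OF R(1) R(1)])
  show "hermitian (\<lambda>x. R (R x))" by (rule hermitian_compose_self[OF R(2)])
  show "quad_form (\<lambda>x. R (R x)) x = (norm (R x))\<^sup>2" for x by (rule quad_form_compose_self[OF R(2)])
  have lin: "linear (re_part N N')" "linear (im_part N N')"
    using re_im(1,2) by (simp_all add: bounded_clinear_linear)
  show "im_part N N' (R (R x)) = R (R (im_part N N' x))" for x
    unfolding R_def by (simp add: linear_diff[OF lin(2)] linear_scale[OF lin(2)]
        linear_diff[OF lin(1)] linear_scale[OF lin(1)] re_im(5))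
qed

text \<open>Second application: the imaginary part penalised by the defect plus \<open>(Re N - b)\<^sup>2\<close>.\<close>

lemma im_part_approx_eigenvalue:
  fixes N :: "'a::complex_inner \<Rightarrow> 'a"
  assumes NN': "normal_pair N N'" and bnd: "\<And>x. norm (N x) \<le> M * norm x"
    and b: "\<And>e. e > 0 \<Longrightarrow> \<exists>y. norm y = 1 \<and>
      quad_form (norm_defect M N N') y < e \<and> norm (re_part N N' y - b *\<^sub>R y) < e"
  obtains c where "\<And>e. e > 0 \<Longrightarrow> \<exists>y. norm y = 1 \<and>
    quad_form (norm_defect M N N') y + (norm (re_part N N' y - b *\<^sub>R y))\<^sup>2 < e \<and>
    norm (im_part N N' y - c *\<^sub>R y) < e"
proof -
  note re_im = normal_pair_re_im_parts[OF NN'] and defect = normal_pair_norm_defect[OF NN', of M]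
  define R where "R = (\<lambda>x. re_part N N' x - b *\<^sub>R x)"
  define Q where "Q = (\<lambda>x. norm_defect M N N' x + R (R x))"
  note sq = re_part_shift_square[OF NN', where b=b]
  have qQ: "quad_form Q x = quad_form (norm_defect M N N') x + (norm (R x))\<^sup>2" for x
    using sq(4)[of x] unfolding Q_def R_def quad_form_def by (simp add: cinner_add_left)
  interpret hermitian_penalty "im_part N N'" Q
  proof (rule hermitian_penalty.intro)
    show "bounded_linear (im_part N N')" by (rule bounded_clinear_bounded_linear[OF re_im(2)])
    show "hermitian (im_part N N')" by (rule re_im(4))
    show "bounded_linear Q" unfolding Q_def R_def
      by (rule bounded_linear_add[OF bounded_clinear_bounded_linear[OF defect(1)] sq(1)])
    show "hermitian Q" unfolding Q_def R_def by (rule hermitian_add[OF defect(2) sq(2)])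
    show "im_part N N' (Q x) = Q (im_part N N' x)" for x
      unfolding Q_def R_def using re_im(2) defect(4) sq(3)
      by (simp add: linear_add[OF bounded_clinear_linear])
    show "0 \<le> quad_form Q x" for x
      using quad_form_norm_defect_nonneg[OF NN' bnd, of x] by (simp add: qQ)
    obtain y :: 'a where "norm y = 1" using b[of 1] by auto
    then show "\<exists>x::'a. x \<noteq> 0" by (intro exI[of _ y]) auto
  qed
  have "\<exists>x. norm x = 1 \<and> quad_form Q x < e \<and> - onorm (im_part N N') - e < quad_form (im_part N N') x"
    if e: "e > 0" for e
  proof -
    obtain y where y: "norm y = 1" "quad_form (norm_defect M N N') y < e/2" "norm (R y) < min (e/2) 1"
      using b[of "min (e/2) 1"] e unfolding R_def by auto
    have "(norm (R y))\<^sup>2 \<le> norm (R y)" using y(3) by (simp add: power2_eq_square mult_left_le_one_le)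
    then have "quad_form Q y < e" unfolding qQ using y by linarith
    moreover have "\<bar>quad_form (im_part N N') y\<bar> \<le> onorm (im_part N N')"
      using abs_Re_cinner_le_norm[of "im_part N N' y" y] bounded_clinear_norm_le[OF re_im(2), of y] y(1)
      unfolding quad_form_def by simp
    ultimately show ?thesis using y(1) e by (intro exI[of _ y]) auto
  qed
  then obtain c where c: "\<And>e. e > 0 \<Longrightarrow>
      \<exists>y. norm y = 1 \<and> quad_form Q y < e \<and> norm (im_part N N' y - c *\<^sub>R y) < e"
    using approx_joint_eigenvector by blast
  show ?thesis
  proof (rule that)
    fix e :: real assume "e > 0"
    then obtain y where "norm y = 1" "quad_form Q y < e" "norm (im_part N N' y - c *\<^sub>R y) < e"
      using c by blast
    then show "\<exists>y. norm y = 1 \<and>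
        quad_form (norm_defect M N N') y + (norm (re_part N N' y - b *\<^sub>R y))\<^sup>2 < e \<and>
        norm (im_part N N' y - c *\<^sub>R y) < e"
      unfolding qQ R_def by blast
  qed
qed

lemma normal_pair_norming_approx_eigenvalue:
  fixes N :: "'a::complex_inner \<Rightarrow> 'a"
  assumes NN': "normal_pair N N'" and bnd: "\<And>x. norm (N x) \<le> M * norm x"
    and approx: "\<And>e. e > 0 \<Longrightarrow> \<exists>x. norm x = 1 \<and> M - norm (N x) < e \<and> \<beta> - e < Re (cinner (N x) x)"
  obtains \<mu> where "\<beta> \<le> Re \<mu>"
    "\<And>e. e > 0 \<Longrightarrow> \<exists>y. norm y = 1 \<and> norm (N y - \<mu> *\<^sub>C y) < e \<and> M - norm (N y) < e"
proof -
  obtain b where b: "\<beta> \<le> b" "\<And>e. e > 0 \<Longrightarrow> \<exists>y. norm y = 1 \<and>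
      quad_form (norm_defect M N N') y < e \<and> norm (re_part N N' y - b *\<^sub>R y) < e"
    using re_part_approx_eigenvalue[OF NN' bnd approx] by blast
  obtain c where c: "\<And>e. e > 0 \<Longrightarrow> \<exists>y. norm y = 1 \<and>
      quad_form (norm_defect M N N') y + (norm (re_part N N' y - b *\<^sub>R y))\<^sup>2 < e \<and>
      norm (im_part N N' y - c *\<^sub>R y) < e"
    using im_part_approx_eigenvalue[OF NN' bnd b(2)] by blast
  show ?thesis
  proof (rule that[of "Complex b c"])
    show "\<beta> \<le> Re (Complex b c)" using b(1) by simp
    fix e :: real assume e: "e > 0"
    define d where "d = min (e/2) 1"
    have d: "0 < d" "d \<le> 1" "2 * d \<le> e" "d \<le> e" unfolding d_def using e by auto
    then have dd: "d\<^sup>2 \<le> d" by (simp add: power2_eq_square mult_left_le_one_le)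
    obtain y where y: "norm y = 1"
      "quad_form (norm_defect M N N') y + (norm (re_part N N' y - b *\<^sub>R y))\<^sup>2 < d\<^sup>2"
      "norm (im_part N N' y - c *\<^sub>R y) < d\<^sup>2"
      using c[of "d\<^sup>2"] d by auto
    have "(norm (re_part N N' y - b *\<^sub>R y))\<^sup>2 < d\<^sup>2" and q: "quad_form (norm_defect M N N') y < d\<^sup>2"
      using y(2) quad_form_norm_defect_nonneg[OF NN' bnd, of y]
        zero_le_power2[of "norm (re_part N N' y - b *\<^sub>R y)"] by linarith+
    then have re: "norm (re_part N N' y - b *\<^sub>R y) < d" using d by (simp add: power_less_imp_less_base)
    have "Complex b c = complex_of_real b + \<i> * complex_of_real c" by (simp add: complex_eq_iff)
    then have "N y - Complex b c *\<^sub>C y = (re_part N N' y - b *\<^sub>R y) + \<i> *\<^sub>C (im_part N N' y - c *\<^sub>R y)"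
      using normal_pair_re_im_parts(6)[OF NN', of y]
      by (simp add: scaleC_add_left scaleC_diff_right scaleC_scaleC[symmetric] scaleC_of_real algebra_simps)
    then have "norm (N y - Complex b c *\<^sub>C y) \<le> norm (re_part N N' y - b *\<^sub>R y) + norm (im_part N N' y - c *\<^sub>R y)"
      using norm_triangle_ineq[of "re_part N N' y - b *\<^sub>R y" "\<i> *\<^sub>C (im_part N N' y - c *\<^sub>R y)"]
      by simp
    then have Ny: "norm (N y - Complex b c *\<^sub>C y) < e" using re y(3) dd d by linarith
    have "(M - norm (N y))\<^sup>2 \<le> (M - norm (N y)) * (M + norm (N y))"
      using bnd[of y] y(1) by (simp add: power2_eq_square mult_left_mono)
    also have "\<dots> < d\<^sup>2" using q quad_form_norm_defect_unit[OF NN' y(1), of M] by simp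
    finally have "M - norm (N y) < d" using d by (simp add: power_less_imp_less_base)
    then show "\<exists>y. norm y = 1 \<and> norm (N y - Complex b c *\<^sub>C y) < e \<and> M - norm (N y) < e"
      using y(1) Ny d by auto
  qed
qed

lemma norming_approx_eigenvalue:
  assumes A: "bounded_clinear A"
    and approx: "\<And>e. e > 0 \<Longrightarrow> \<exists>y. norm y = 1 \<and> norm (A y - \<mu> *\<^sub>C y) < e \<and> onorm A - norm (A y) < e"
  shows "\<mu> \<in> op_spectrum A" and "cmod \<mu> = onorm A"
proof -
  show "\<mu> \<in> op_spectrum A"
    using approx by (intro approx_eigenvalue_in_spectrum) (auto simp: approx_eigenvalue_def)
  have bounds: "cmod \<mu> < onorm A + e \<and> onorm A < cmod \<mu> + 2 * e" if e: "e > 0" for e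
  proof -
    obtain y where y: "norm y = 1" "norm (A y - \<mu> *\<^sub>C y) < e" "onorm A - norm (A y) < e"
      using approx[OF e] by blast
    have "\<bar>norm (A y) - cmod \<mu>\<bar> < e"
      using norm_triangle_ineq3[of "A y" "\<mu> *\<^sub>C y"] y(1,2) by simp
    moreover have "norm (A y) \<le> onorm A" using bounded_clinear_norm_le[OF A, of y] y(1) by simp
    ultimately show ?thesis using y(3) unfolding abs_less_iff by linarith
  qed
  show "cmod \<mu> = onorm A"
  proof (rule antisym)
    show "cmod \<mu> \<le> onorm A"
      by (rule field_le_epsilon) (use bounds in \<open>auto intro: less_imp_le\<close>)
    show "onorm A \<le> cmod \<mu>"
    proof (rule field_le_epsilon)
      fix e :: real assume "e > 0"
      then show "onorm A \<le> cmod \<mu> + e" using bounds[of "e/2"] by simp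
    qed
  qed
qed

text \<open>Multiplying by \<open>w\<^sup>*\<close> turns the direction \<open>w\<close> into the real axis.\<close>

lemma max_numerical_range_supporting_spectral_point:
  fixes A :: "'a::chilbert_space \<Rightarrow> 'a"
  assumes AB: "normal_pair A B" and l: "l \<in> max_numerical_range A" and w: "cmod w = 1"
  obtains \<mu> where "\<mu> \<in> op_spectrum A" "cmod \<mu> = onorm A" "Re (cnj w * l) \<le> Re (cnj w * \<mu>)"
proof -
  have A: "bounded_clinear A" using AB by (simp add: normal_pair_def)
  have ww: "cnj w * w = 1" using w by (metis complex_norm_square mult.commute of_real_1 power_one)
  define N where "N = (\<lambda>x. cnj w *\<^sub>C A x)"
  have NN': "normal_pair N (\<lambda>x. w *\<^sub>C B x)"
    unfolding N_def using normal_pair_scaleC[OF AB, of "cnj w"] by simp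
  have NA: "norm (N x) = norm (A x)" for x unfolding N_def using w by simp
  have A_N: "A x = w *\<^sub>C N x" for x
    unfolding N_def by (simp add: scaleC_scaleC ww[unfolded mult.commute[of "cnj w"]] scaleC_one)
  have bnd: "norm (N x) \<le> onorm A * norm x" for x unfolding NA by (rule bounded_clinear_norm_le[OF A])
  have "\<exists>x. norm x = 1 \<and> onorm A - norm (N x) < e \<and> Re (cnj w * l) - e < Re (cinner (N x) x)"
    if e: "e > 0" for e
  proof -
    obtain x where x: "norm x = 1" "\<bar>norm (A x) - onorm A\<bar> < e" "cmod (cinner (A x) x - l) < e"
      using max_numerical_range_approxD[OF l e] by blast
    have "Re (cnj w * l) - Re (cinner (N x) x) = Re (cnj w * (l - cinner (A x) x))"
      unfolding N_def by (simp add: cinner_scaleC_left algebra_simps)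
    also have "\<dots> \<le> cmod (cinner (A x) x - l)"
      using complex_Re_le_cmod[of "cnj w * (l - cinner (A x) x)"] w
      by (simp add: norm_mult norm_minus_commute)
    finally show "\<exists>x. norm x = 1 \<and> onorm A - norm (N x) < e \<and> Re (cnj w * l) - e < Re (cinner (N x) x)"
      using x NA by (intro exI[of _ x]) auto
  qed
  then obtain \<mu>' where \<mu>': "Re (cnj w * l) \<le> Re \<mu>'"
    "\<And>e. e > 0 \<Longrightarrow> \<exists>y. norm y = 1 \<and> norm (N y - \<mu>' *\<^sub>C y) < e \<and> onorm A - norm (N y) < e"
    using normal_pair_norming_approx_eigenvalue[OF NN' bnd] by blast
  have "\<exists>y. norm y = 1 \<and> norm (A y - (w * \<mu>') *\<^sub>C y) < e \<and> onorm A - norm (A y) < e"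
    if e: "e > 0" for e
  proof -
    obtain y where "norm y = 1" "norm (N y - \<mu>' *\<^sub>C y) < e" "onorm A - norm (N y) < e"
      using \<mu>'(2)[OF e] by blast
    moreover have "A y - (w * \<mu>') *\<^sub>C y = w *\<^sub>C (N y - \<mu>' *\<^sub>C y)"
      unfolding A_N by (simp add: scaleC_diff_right scaleC_scaleC)
    ultimately show ?thesis using w NA by auto
  qed
  note \<mu> = norming_approx_eigenvalue[OF A this]
  have "Re (cnj w * (w * \<mu>')) = Re \<mu>'" by (simp add: mult.assoc[symmetric] ww)
  then show ?thesis using that \<mu> \<mu>'(1) by simp
qed

lemma normal_max_numerical_range_subset_hull:
  fixes A :: "'a::chilbert_space \<Rightarrow> 'a"
  assumes AB: "normal_pair A B"
  shows "max_numerical_range A \<subseteq> convex hull (op_spectrum A \<inter> {z. cmod z = onorm A})"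
proof
  fix l assume l: "l \<in> max_numerical_range A"
  define S where "S = op_spectrum A \<inter> {z. cmod z = onorm A}"
  have "S = op_spectrum A \<inter> sphere 0 (onorm A)" unfolding S_def by (auto simp: dist_norm)
  then have "compact S"
    using closed_Int_compact[OF normal_spectrum_closed[OF AB] compact_sphere] by simp
  then have "closed (convex hull S)" by (simp add: compact_imp_closed compact_convex_hull)
  have in_hull: "\<mu> \<in> convex hull S" if "\<mu> \<in> op_spectrum A" "cmod \<mu> = onorm A" for \<mu>
    using that hull_subset[of S convex] unfolding S_def by blast
  show "l \<in> convex hull S"
  proof (rule ccontr)
    assume "l \<notin> convex hull S"
    then obtain a b where ab: "inner a l < b" "\<And>x. x \<in> convex hull S \<Longrightarrow> b < inner a x"
      using separating_hyperplane_closed_point[OF convex_convex_hull \<open>closed (convex hull S)\<close>] by blast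
    obtain \<mu>0 where "\<mu>0 \<in> op_spectrum A" "cmod \<mu>0 = onorm A"
      using max_numerical_range_supporting_spectral_point[OF AB l, of 1] by auto
    then have "b < inner a \<mu>0" using ab(2) in_hull by blast
    then have "a \<noteq> 0" using ab(1) by auto
    define w where "w = - a / of_real (cmod a)"
    have w: "cmod w = 1" unfolding w_def using \<open>a \<noteq> 0\<close> by (simp add: norm_divide)
    have Re_w: "Re (cnj w * z) = - inner a z / cmod a" for z
      unfolding w_def using \<open>a \<noteq> 0\<close> by (simp add: inner_complex_def Re_divide_of_real field_simps)
    obtain \<mu> where \<mu>: "\<mu> \<in> op_spectrum A" "cmod \<mu> = onorm A" "Re (cnj w * l) \<le> Re (cnj w * \<mu>)"
      using max_numerical_range_supporting_spectral_point[OF AB l w] by blast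
    have "inner a \<mu> \<le> inner a l"
      using \<mu>(3) \<open>a \<noteq> 0\<close> unfolding Re_w by (simp add: divide_le_cancel)
    moreover have "b < inner a \<mu>" using ab(2) in_hull[OF \<mu>(1,2)] by blast
    ultimately show False using ab(1) by simp
  qed
qed

theorem theorem4:
  fixes A :: "'a::chilbert_space \<Rightarrow> 'a"
  assumes "\<exists>x::'a. x \<noteq> 0"
    and "normal_op A"
  shows "max_numerical_range A = convex hull (op_spectrum A \<inter> {z. cmod z = onorm A})"
proof -
  obtain B where AB: "normal_pair A B" using assms(2) normal_op_iff_normal_pair by blast
  show ?thesis
    using normal_max_numerical_range_subset_hull[OF AB]
      normal_spectrum_hull_subset_max_numerical_range[OF assms(1) AB] by (rule subset_antisym)
qed

end
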